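(* Let $\Gamma_0\subset G_0$ be a Schottky group and $u\in Z^1(\Gamma_0,V)$. If there exist $\gamma_1,\gamma_2\in\Gamma_0$ with $\alpha_u(\gamma_1)<0<\alpha_u(\gamma_2)$, then the affine deformation $\Gamma_u$ does not act properly on $\mathsf E$.
   Context: $G_0=\mathrm{PSL}(2,\mathbb R)$; fix $r\ge1$ and let $V=V_r$ be the $(2r+1)$-dimensional irreducible representation of $G_0$ (the $2r$-th symmetric power of the standard representation of $\mathrm{SL}(2,\mathbb R)$), with action $L$ and invariant nondegenerate symmetric bilinear form $B$. For hyperbolic $\gamma\in G_0$, lift to $\tilde\gamma\in\mathrm{SL}(2,\mathbb R)$ with eigenvalues $\lambda,\lambda^{-1}$, $|\lambda|<1$, eigenvectors $v_+$ (for $\lambda$) and $v_-$ (for $\lambda^{-1}$) with $(v_-,v_+)$ positively oriented; the neutral vector $x^0(\gamma)$ is the positive multiple of $v_-^rv_+^r\in V$ with $B(x^0(\gamma),x^0(\gamma))=1$. A Schottky group is a finitely generated nonabelian discrete subgroup of $G_0$ all of whose nontrivial elements are hyperbolic. A cocycle $u\in Z^1(\Gamma_0,V)$ satisfies $u(\gamma_1\gamma_2)=u(\gamma_1)+L(\gamma_1)u(\gamma_2)$. $\mathsf E$ is the affine space modeled on $V$ and $\Gamma_u$ is the group of affine maps $x\mapsto L(\gamma)x+u(\gamma)$, $\gamma\in\Gamma_0$. Margulis invariant: $\alpha_u(\gamma)=B(u(\gamma),x^0(\gamma))$. "Acts properly" means properly discontinuously. *)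

theory Defs
  imports "HOL-Analysis.Analysis" "HOL-Computational_Algebra.Polynomial"
begin

type_synonym mat2 = "real^2^2"
type_synonym Vvec = "nat \<Rightarrow> real"

definition SL2 :: "mat2 set" where
  "SL2 = {g. det g = 1}"

definition hyperbolic :: "mat2 \<Rightarrow> bool" where
  "hyperbolic g \<longleftrightarrow> g \<in> SL2 \<and> \<bar>trace g\<bar> > 2"

text \<open>Subgroup of SL(2,R) generated by S and -I (preimage of the subgroup of PSL(2,R)
 generated by the image of S).\<close>
inductive_set sl_gen :: "mat2 set \<Rightarrow> mat2 set" for S where
  gen_one: "mat 1 \<in> sl_gen S"
| gen_neg: "- mat 1 \<in> sl_gen S"
| gen_base: "s \<in> S \<Longrightarrow> s \<in> sl_gen S"
| gen_mult: "a \<in> sl_gen S \<Longrightarrow> b \<in> sl_gen S \<Longrightarrow> a ** b \<in> sl_gen S"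
| gen_inv: "a \<in> sl_gen S \<Longrightarrow> matrix_inv a \<in> sl_gen S"

text \<open>A subgroup Gamma0 of PSL(2,R) is represented by its full preimage G in SL(2,R).\<close>
definition psl_subgroup :: "mat2 set \<Rightarrow> bool" where
  "psl_subgroup G \<longleftrightarrow> G \<subseteq> SL2 \<and> mat 1 \<in> G \<and> - mat 1 \<in> G \<and>
     (\<forall>a\<in>G. \<forall>b\<in>G. a ** b \<in> G) \<and> (\<forall>a\<in>G. matrix_inv a \<in> G)"

definition schottky :: "mat2 set \<Rightarrow> bool" where
  "schottky G \<longleftrightarrow> psl_subgroup G
     \<and> (\<exists>S. finite S \<and> S \<subseteq> SL2 \<and> G = sl_gen S)
     \<and> (\<exists>a\<in>G. \<exists>b\<in>G. a ** b \<noteq> b ** a \<and> a ** b \<noteq> - (b ** a))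
     \<and> (\<forall>g\<in>G. \<exists>e>0. \<forall>h\<in>G. dist h g < e \<longrightarrow> h = g)
     \<and> (\<forall>g\<in>G. g \<noteq> mat 1 \<and> g \<noteq> - mat 1 \<longrightarrow> hyperbolic g)"

text \<open>A homogeneous polynomial  sum_k c_k e1^k e2^(2r-k)  is encoded by its coefficient
 function c (c k = 0 for k > 2r); as a polynomial in t it is sum_k c_k t^k
 (t stands for e1, 1 for e2). A vector v = v1 e1 + v2 e2 becomes [:v2, v1:].\<close>

definition Vr :: "nat \<Rightarrow> Vvec set" where
  "Vr r = {c. \<forall>k>2*r. c k = 0}"

definition lin :: "real^2 \<Rightarrow> real poly" where
  "lin v = [: v$2, v$1 :]"

definition Lrep :: "nat \<Rightarrow> mat2 \<Rightarrow> Vvec \<Rightarrow> Vvec" where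
  "Lrep r g c = coeff (\<Sum>k\<le>2*r. smult (c k)
      ([: g$2$1, g$1$1 :] ^ k * [: g$2$2, g$1$2 :] ^ (2*r - k)))"

definition sym_prod :: "nat \<Rightarrow> real^2 \<Rightarrow> real^2 \<Rightarrow> Vvec" where
  "sym_prod r vm vp = coeff (lin vm ^ r * lin vp ^ r)"

text \<open>Invariant nondegenerate symmetric bilinear form (normalised so that B(x0,x0) > 0 on
 neutral directions).\<close>
definition Bform :: "nat \<Rightarrow> Vvec \<Rightarrow> Vvec \<Rightarrow> real" where
  "Bform r c d = (-1)^r * (\<Sum>k\<le>2*r. (-1)^k * c k * d (2*r - k) / real (2*r choose k))"

definition is_neutral :: "nat \<Rightarrow> mat2 \<Rightarrow> Vvec \<Rightarrow> bool" where
  "is_neutral r g x \<longleftrightarrow> (\<exists>lam vm vp c.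
      \<bar>lam\<bar> < 1 \<and> vm \<noteq> 0 \<and> vp \<noteq> 0 \<and>
      g *v vp = lam *\<^sub>R vp \<and> g *v vm = (1 / lam) *\<^sub>R vm \<and>
      vm$1 * vp$2 - vm$2 * vp$1 > 0 \<and>
      c > 0 \<and> x = (\<lambda>k. c * sym_prod r vm vp k) \<and> Bform r x x = 1)"

definition neutral :: "nat \<Rightarrow> mat2 \<Rightarrow> Vvec" where
  "neutral r g = (THE x. is_neutral r g x)"

definition margulis :: "nat \<Rightarrow> (mat2 \<Rightarrow> Vvec) \<Rightarrow> mat2 \<Rightarrow> real" where
  "margulis r u g = Bform r (u g) (neutral r g)"

text \<open>u is a function on Gamma0 \<subseteq> PSL(2,R), i.e. on the preimage G, constant on
 fibres {g,-g}.\<close>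
definition cocycle :: "nat \<Rightarrow> mat2 set \<Rightarrow> (mat2 \<Rightarrow> Vvec) \<Rightarrow> bool" where
  "cocycle r G u \<longleftrightarrow> (\<forall>g\<in>G. u g \<in> Vr r \<and> u (- g) = u g) \<and>
     (\<forall>g\<in>G. \<forall>h\<in>G. u (g ** h) = (\<lambda>k. u g k + Lrep r g (u h) k))"

definition aff :: "nat \<Rightarrow> (mat2 \<Rightarrow> Vvec) \<Rightarrow> mat2 \<Rightarrow> Vvec \<Rightarrow> Vvec" where
  "aff r u g x = (\<lambda>k. Lrep r g x k + u g k)"

text \<open>Proper discontinuity of the affine action on E = V_r (compact K \<subseteq> V_r meets only
 finitely many translates; finiteness in the preimage G is equivalent to finiteness in
 Gamma0, as G \<rightarrow> Gamma0 is 2-to-1).\<close>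
definition acts_properly :: "nat \<Rightarrow> mat2 set \<Rightarrow> (mat2 \<Rightarrow> Vvec) \<Rightarrow> bool" where
  "acts_properly r G u \<longleftrightarrow> (\<forall>K. compact K \<and> K \<subseteq> Vr r \<longrightarrow>
      finite {g\<in>G. aff r u g ` K \<inter> K \<noteq> {}})"

end

theory Submission
  imports Defs
begin

(* The Margulis invariant of a hyperbolic g is a positive multiple of the neutral (r-th)
   coordinate of u g in the eigenbasis vm^i vp^(2r-i) of V_r. In that basis the affine map of g
   contracts the coordinates on one side of r, expands those on the other side and translates
   the neutral one by the neutral coordinate of u g. Take A and Y with invariants of opposite
   signs, the expanding eigenline of Y transverse to the contracting eigenline of A (conjugating Y
   inside the Schottky group arranges this), and m_j / n_j close to the ratio of the two drifts.
   Points x_j, pushed by Y^(n_j) along a line transverse to both eigenframes, and their images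
   under A^(m_j) Y^(n_j) then stay in one compact box, while the elements A^(m_j) Y^(n_j) are
   pairwise distinct; so the action is not proper. *)

section \<open>Two-by-two matrices\<close>

lemma mat2_eqI:
  "(A::mat2)$1$1 = B$1$1 \<Longrightarrow> A$1$2 = B$1$2 \<Longrightarrow> A$2$1 = B$2$1 \<Longrightarrow> A$2$2 = B$2$2 \<Longrightarrow> A = B"
  by (simp add: vec_eq_iff forall_2)

lemma vec2_eqI: "(x::real^2)$1 = y$1 \<Longrightarrow> x$2 = y$2 \<Longrightarrow> x = y"
  by (simp add: vec_eq_iff forall_2)

lemma mat2_mult_nth [simp]: "(A ** (B::mat2))$i$j = A$i$1 * B$1$j + A$i$2 * B$2$j"
  by (simp add: matrix_matrix_mult_def sum_2)

lemma mat2_vector_mult_nth [simp]: "((A::mat2) *v x)$i = A$i$1 * x$1 + A$i$2 * x$2"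
  by (simp add: matrix_vector_mult_def sum_2)

lemma mat2_one_nth [simp]:
  "(mat 1::mat2)$1$1 = 1" "(mat 1::mat2)$1$2 = 0" "(mat 1::mat2)$2$1 = 0" "(mat 1::mat2)$2$2 = 1"
  by (simp_all add: mat_def)

lemma mat2_inverse:
  assumes "det (C::mat2) \<noteq> 0"
  shows "C ** matrix_inv C = mat 1" "matrix_inv C ** C = mat 1"
proof -
  have "\<exists>C'. C ** C' = mat 1 \<and> C' ** C = mat 1"
    using assms by (simp add: invertible_det_nz[symmetric] invertible_def)
  then have "C ** matrix_inv C = mat 1 \<and> matrix_inv C ** C = mat 1"
    unfolding matrix_inv_def by (rule someI_ex)
  then show "C ** matrix_inv C = mat 1" "matrix_inv C ** C = mat 1" by auto
qed

definition colmat :: "real^2 \<Rightarrow> real^2 \<Rightarrow> mat2" where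
  "colmat v w = (\<chi> i j. if j = 1 then v$i else w$i)"

definition det2 :: "real^2 \<Rightarrow> real^2 \<Rightarrow> real" where
  "det2 v w = v$1 * w$2 - v$2 * w$1"

definition colmat_inv :: "real^2 \<Rightarrow> real^2 \<Rightarrow> mat2" where
  "colmat_inv v w = (\<chi> i j. (if i = 1 then (if j = 1 then w$2 else - w$1)
                             else (if j = 1 then - v$2 else v$1)) / det2 v w)"

lemma colmat_nth [simp]:
  "colmat v w $1$1 = v$1" "colmat v w $2$1 = v$2" "colmat v w $1$2 = w$1" "colmat v w $2$2 = w$2"
  by (simp_all add: colmat_def)

lemma colmat_inv_nth [simp]:
  "colmat_inv v w $1$1 = w$2 / det2 v w" "colmat_inv v w $1$2 = - w$1 / det2 v w"
  "colmat_inv v w $2$1 = - v$2 / det2 v w" "colmat_inv v w $2$2 = v$1 / det2 v w"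
  by (simp_all add: colmat_inv_def)

lemma colmat_mult_colmat_inv: "det2 v w \<noteq> 0 \<Longrightarrow> colmat v w ** colmat_inv v w = mat 1"
  by (rule mat2_eqI) (simp_all add: field_simps, simp_all add: det2_def algebra_simps)

lemma colmat_inv_mult_colmat: "det2 v w \<noteq> 0 \<Longrightarrow> colmat_inv v w ** colmat v w = mat 1"
  by (rule mat2_eqI) (simp_all add: field_simps, simp_all add: det2_def algebra_simps)

lemma det_colmat: "det (colmat v w) = det2 v w"
  by (simp add: det_2 det2_def)

lemma det_colmat_inv_nonzero: "det2 v w \<noteq> 0 \<Longrightarrow> det (colmat_inv v w) \<noteq> 0"
  using det_mul[of "colmat_inv v w" "colmat v w"] by (auto simp: colmat_inv_mult_colmat)

lemma colmat_inv_mult_first: "det2 v w \<noteq> 0 \<Longrightarrow> colmat_inv v w *v v = vector [1, 0]"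
  by (rule vec2_eqI) (simp_all add: divide_simps, simp add: det2_def algebra_simps)

lemma colmat_inv_mult_second: "det2 v w \<noteq> 0 \<Longrightarrow> colmat_inv v w *v w = vector [0, 1]"
  by (rule vec2_eqI) (simp_all add: divide_simps, simp add: det2_def algebra_simps)

lemma det2_eq_0_parallel:
  assumes "det2 x y = 0" "y \<noteq> 0"
  shows "\<exists>c. x = c *\<^sub>R y"
proof (cases "y$1 = 0")
  case False
  have "x = (x$1 / y$1) *\<^sub>R y"
    using assms False by (intro vec2_eqI) (auto simp: det2_def field_simps)
  then show ?thesis by blast
next
  case True
  then have "y$2 \<noteq> 0" using assms by (auto simp: vec_eq_iff forall_2)
  then have "x = (x$2 / y$2) *\<^sub>R y"
    using assms True by (intro vec2_eqI) (auto simp: det2_def field_simps)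
  then show ?thesis by blast
qed

lemma det2_cramer:
  assumes "det2 x y \<noteq> 0"
  shows "v = (det2 v y / det2 x y) *\<^sub>R x + (det2 x v / det2 x y) *\<^sub>R y"
proof -
  have "det2 v y * x$1 + det2 x v * y$1 = v$1 * det2 x y"
    and "det2 v y * x$2 + det2 x v * y$2 = v$2 * det2 x y"
    by (simp_all add: det2_def algebra_simps)
  then show ?thesis using assms by (intro vec2_eqI) (simp_all add: field_simps)
qed

lemma det2_lincomb_left: "det2 (p *\<^sub>R x + q *\<^sub>R y) y = p * det2 x y"
  by (simp add: det2_def algebra_simps)

lemma det2_lincomb_right: "det2 x (p *\<^sub>R x + q *\<^sub>R y) = q * det2 x y"
  by (simp add: det2_def algebra_simps)

lemma det2_scaleR_left: "det2 (c *\<^sub>R x) y = c * det2 x y"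
  by (simp add: det2_def algebra_simps)

lemma det2_scaleR_right: "det2 x (c *\<^sub>R y) = c * det2 x y"
  by (simp add: det2_def algebra_simps)

lemma det2_matrix_vector_mult: "det2 (g *v x) (g *v y) = det g * det2 x y"
  by (simp add: det2_def det_2 algebra_simps)

lemma matrix_vector_mult_lincomb:
  "(g::mat2) *v (p *\<^sub>R x + q *\<^sub>R y) = p *\<^sub>R (g *v x) + q *\<^sub>R (g *v y)"
  by (rule vec2_eqI) (simp_all add: algebra_simps)

section \<open>Binary forms\<close>

text \<open>Identities in \<open>Vr r\<close> are proved by evaluating the dehomogenised forms
  \<open>hom_eval r c t 1\<close> at all but finitely many \<open>t\<close>.\<close>

definition hom_eval :: "nat \<Rightarrow> Vvec \<Rightarrow> real \<Rightarrow> real \<Rightarrow> real" where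
  "hom_eval r c y1 y2 = (\<Sum>k\<le>2*r. c k * y1 ^ k * y2 ^ (2*r - k))"

definition Vpoly :: "nat \<Rightarrow> Vvec \<Rightarrow> real poly" where
  "Vpoly r c = (\<Sum>k\<le>2*r. monom (c k) k)"

lemma poly_Vpoly: "poly (Vpoly r c) t = hom_eval r c t 1"
  by (simp add: Vpoly_def hom_eval_def poly_sum poly_monom)

lemma coeff_Vpoly: "coeff (Vpoly r c) k = (if k \<le> 2*r then c k else 0)"
  by (auto simp: Vpoly_def coeff_sum coeff_monom)

lemma Vr_eqI_off_root:
  assumes c: "c \<in> Vr r" and d: "d \<in> Vr r" and ab: "a \<noteq> 0 \<or> b \<noteq> 0"
    and eq: "\<And>t. a + b * t \<noteq> 0 \<Longrightarrow> hom_eval r c t 1 = hom_eval r d t 1"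
  shows "c = d"
proof -
  let ?p = "Vpoly r c - Vpoly r d"
  have fin: "finite {t::real. a + b * t = 0}"
  proof (cases "b = 0")
    case True then show ?thesis using ab by simp
  next
    case False
    have "{t::real. a + b * t = 0} \<subseteq> {- a / b}" using False by (auto simp: field_simps)
    then show ?thesis using finite_subset by blast
  qed
  have "?p = 0"
  proof (rule ccontr)
    assume "?p \<noteq> 0"
    then have "finite {t. poly ?p t = 0}" by (rule poly_roots_finite)
    moreover have "UNIV \<subseteq> {t. poly ?p t = 0} \<union> {t. a + b * t = 0}"
      using eq by (auto simp: poly_Vpoly)
    ultimately show False using fin finite_subset infinite_UNIV_char_0 by blast
  qed
  then have "coeff (Vpoly r c) k = coeff (Vpoly r d) k" for k by simp
  then show ?thesis using c d unfolding Vr_def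
    by (auto simp: coeff_Vpoly fun_eq_iff) (metis not_le)
qed

lemma Vr_eqI:
  assumes "c \<in> Vr r" "d \<in> Vr r" "\<And>t. hom_eval r c t 1 = hom_eval r d t 1"
  shows "c = d"
  using Vr_eqI_off_root[of c r d 1 0] assms by simp

lemma hom_eval_coeff:
  assumes "degree p \<le> 2*r"
  shows "hom_eval r (coeff p) t 1 = poly p t"
proof -
  have "poly p t = (\<Sum>i\<le>degree p. coeff p i * t ^ i)" by (rule poly_altdef)
  also have "\<dots> = (\<Sum>i\<le>2*r. coeff p i * t ^ i)"
    by (rule sum.mono_neutral_left) (auto simp: assms coeff_eq_0)
  finally show ?thesis by (simp add: hom_eval_def)
qed

lemma hom_eval_homogeneous: "hom_eval r c (s * y1) (s * y2) = s ^ (2*r) * hom_eval r c y1 y2"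
proof -
  have "c k * (s*y1) ^ k * (s*y2) ^ (2*r - k) = s^(2*r) * (c k * y1 ^ k * y2 ^ (2*r - k))"
    if "k \<le> 2*r" for k
  proof -
    have "s^(2*r) = s^k * s^(2*r-k)" using that by (simp add: power_add[symmetric])
    then show ?thesis by (simp add: power_mult_distrib)
  qed
  then show ?thesis unfolding hom_eval_def sum_distrib_left by (rule sum.cong[OF refl]) simp
qed

lemma hom_eval_dehomogenize:
  assumes "y2 \<noteq> 0"
  shows "hom_eval r c y1 y2 = y2 ^ (2*r) * hom_eval r c (y1 / y2) 1"
  using hom_eval_homogeneous[of r c y2 "y1/y2" 1] assms by simp

lemma hom_eval_lincomb:
  "hom_eval r (\<lambda>k. a * c k + b * d k) y1 y2 = a * hom_eval r c y1 y2 + b * hom_eval r d y1 y2"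
  by (simp add: hom_eval_def sum.distrib sum_distrib_left algebra_simps)

lemma hom_eval_scale: "hom_eval r (\<lambda>k. a * c k) y1 y2 = a * hom_eval r c y1 y2"
  using hom_eval_lincomb[of r a c 0 c] by simp

lemma hom_eval_sum:
  "finite I \<Longrightarrow> hom_eval r (\<lambda>k. \<Sum>i\<in>I. f i k) y1 y2 = (\<Sum>i\<in>I. hom_eval r (f i) y1 y2)"
  by (simp add: hom_eval_def sum_distrib_right sum.swap[of _ I])

lemma degree_linear_poly: "degree [:a, b:] \<le> 1"
  by (auto simp: degree_pCons_eq_if)

lemma degree_power_mult_power_le:
  assumes "degree p \<le> 1" "degree q \<le> 1" "i \<le> n"
  shows "degree (p ^ i * q ^ (n - i)) \<le> n"
proof -
  have "degree (p ^ i * q ^ (n - i)) \<le> degree (p ^ i) + degree (q ^ (n - i))"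
    by (rule degree_mult_le)
  also have "\<dots> \<le> degree p * i + degree q * (n - i)" using degree_power_le add_mono by blast
  also have "\<dots> \<le> 1 * i + 1 * (n - i)" using assms by (intro add_mono mult_right_mono) auto
  finally show ?thesis using assms by simp
qed

definition Lrep_poly :: "nat \<Rightarrow> mat2 \<Rightarrow> Vvec \<Rightarrow> real poly" where
  "Lrep_poly r g c = (\<Sum>k\<le>2*r. smult (c k) ([: g$2$1, g$1$1 :] ^ k * [: g$2$2, g$1$2 :] ^ (2*r - k)))"

lemma Lrep_eq_coeff: "Lrep r g c = coeff (Lrep_poly r g c)"
  by (simp add: Lrep_def Lrep_poly_def)

lemma degree_Lrep_poly: "degree (Lrep_poly r g c) \<le> 2*r"
  unfolding Lrep_poly_def
  by (rule degree_sum_le)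
    (auto intro!: order.trans[OF degree_smult_le] degree_power_mult_power_le degree_linear_poly)

lemma Lrep_in_Vr: "Lrep r g c \<in> Vr r"
  using degree_Lrep_poly[of r g c] unfolding Vr_def Lrep_eq_coeff by (auto intro!: coeff_eq_0)

lemma hom_eval_Lrep:
  "hom_eval r (Lrep r g c) t 1 = hom_eval r c (g$2$1 + g$1$1 * t) (g$2$2 + g$1$2 * t)"
  unfolding Lrep_eq_coeff hom_eval_coeff[OF degree_Lrep_poly]
  by (simp add: Lrep_poly_def hom_eval_def poly_sum mult.assoc ac_simps)

lemma hom_eval_Lrep_homogeneous:
  assumes "y2 \<noteq> 0"
  shows "hom_eval r (Lrep r h c) y1 y2
       = hom_eval r c (h$2$1 * y2 + h$1$1 * y1) (h$2$2 * y2 + h$1$2 * y1)"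
proof -
  have "hom_eval r (Lrep r h c) y1 y2
      = y2 ^ (2*r) * hom_eval r c (h$2$1 + h$1$1 * (y1/y2)) (h$2$2 + h$1$2 * (y1/y2))"
    using hom_eval_dehomogenize[OF assms] hom_eval_Lrep by simp
  also have "\<dots> = hom_eval r c (y2 * (h$2$1 + h$1$1 * (y1/y2))) (y2 * (h$2$2 + h$1$2 * (y1/y2)))"
    by (simp add: hom_eval_homogeneous)
  finally show ?thesis
    using assms by (simp add: distrib_left mult.commute)
qed

lemma det_nonzero_second_column: "det (g::mat2) \<noteq> 0 \<Longrightarrow> g$2$2 \<noteq> 0 \<or> g$1$2 \<noteq> 0"
  by (auto simp: det_2)

lemma Lrep_mult:
  assumes "det g \<noteq> 0"
  shows "Lrep r g (Lrep r h c) = Lrep r (g ** h) c"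
proof (rule Vr_eqI_off_root[OF Lrep_in_Vr Lrep_in_Vr det_nonzero_second_column[OF assms]])
  fix t assume t: "g$2$2 + g$1$2 * t \<noteq> 0"
  show "hom_eval r (Lrep r g (Lrep r h c)) t 1 = hom_eval r (Lrep r (g ** h) c) t 1"
    unfolding hom_eval_Lrep hom_eval_Lrep_homogeneous[OF t]
    by (simp add: matrix_matrix_mult_def sum_2 algebra_simps)
qed

lemma Lrep_id: "c \<in> Vr r \<Longrightarrow> Lrep r (mat 1) c = c"
  by (rule Vr_eqI[OF Lrep_in_Vr]) (auto simp: hom_eval_Lrep mat_def)

lemma Vr_lincomb: "c \<in> Vr r \<Longrightarrow> d \<in> Vr r \<Longrightarrow> (\<lambda>k. a * c k + b * d k) \<in> Vr r"
  by (auto simp: Vr_def)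

lemma Vr_scale: "c \<in> Vr r \<Longrightarrow> (\<lambda>k. a * c k) \<in> Vr r"
  by (auto simp: Vr_def)

lemma Vr_pointwise_mult: "c \<in> Vr r \<Longrightarrow> (\<lambda>k. a k * c k) \<in> Vr r"
  by (auto simp: Vr_def)

lemma Vr_diff: "c \<in> Vr r \<Longrightarrow> d \<in> Vr r \<Longrightarrow> (\<lambda>k. c k - d k) \<in> Vr r"
  by (auto simp: Vr_def)

lemma Vr_sum: "finite I \<Longrightarrow> (\<And>i. i \<in> I \<Longrightarrow> f i \<in> Vr r) \<Longrightarrow> (\<lambda>k. \<Sum>i\<in>I. f i k) \<in> Vr r"
  by (auto simp: Vr_def intro!: sum.neutral)

lemma Lrep_lincomb:
  "Lrep r g (\<lambda>k. a * c k + b * d k) = (\<lambda>k. a * Lrep r g c k + b * Lrep r g d k)"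
proof (rule Vr_eqI[OF Lrep_in_Vr Vr_lincomb[OF Lrep_in_Vr Lrep_in_Vr]])
  show "hom_eval r (Lrep r g (\<lambda>k. a * c k + b * d k)) t 1
      = hom_eval r (\<lambda>k. a * Lrep r g c k + b * Lrep r g d k) t 1" for t
    by (simp add: hom_eval_Lrep hom_eval_lincomb)
qed

lemma Lrep_add: "Lrep r g (\<lambda>k. c k + d k) = (\<lambda>k. Lrep r g c k + Lrep r g d k)"
  using Lrep_lincomb[of r g 1 c 1 d] by simp

lemma Lrep_scale: "Lrep r g (\<lambda>k. a * c k) = (\<lambda>k. a * Lrep r g c k)"
  using Lrep_lincomb[of r g a c 0 c] by simp

lemma Lrep_diff: "Lrep r g (\<lambda>k. c k - d k) = (\<lambda>k. Lrep r g c k - Lrep r g d k)"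
  using Lrep_lincomb[of r g 1 c "-1" d] by simp

lemma Lrep_sum:
  "finite I \<Longrightarrow> Lrep r g (\<lambda>k. \<Sum>i\<in>I. f i k) = (\<lambda>k. \<Sum>i\<in>I. Lrep r g (f i) k)"
proof (induction I rule: finite_induct)
  case empty then show ?case using Lrep_scale[of r g 0 "\<lambda>k. 0"] by simp
next
  case (insert x F) then show ?case by (simp add: Lrep_add)
qed

section \<open>Symmetric monomials and the invariant form\<close>

definition sym_mono :: "nat \<Rightarrow> nat \<Rightarrow> real^2 \<Rightarrow> real^2 \<Rightarrow> Vvec" where
  "sym_mono r i v w = coeff (lin v ^ i * lin w ^ (2*r - i))"

lemma sym_prod_eq_sym_mono: "sym_prod r vm vp = sym_mono r r vm vp"
  by (simp add: sym_prod_def sym_mono_def mult_2)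

lemma degree_sym_mono_poly: "i \<le> 2*r \<Longrightarrow> degree (lin v ^ i * lin w ^ (2*r - i)) \<le> 2*r"
  unfolding lin_def by (rule degree_power_mult_power_le) (auto intro: degree_linear_poly)

lemma sym_mono_in_Vr: "i \<le> 2*r \<Longrightarrow> sym_mono r i v w \<in> Vr r"
  using degree_sym_mono_poly[of i r v w] unfolding Vr_def sym_mono_def by (auto intro!: coeff_eq_0)

lemma hom_eval_sym_mono:
  "i \<le> 2*r \<Longrightarrow> hom_eval r (sym_mono r i v w) t 1 = (v$2 + v$1 * t) ^ i * (w$2 + w$1 * t) ^ (2*r - i)"
  using degree_sym_mono_poly unfolding sym_mono_def by (simp add: hom_eval_coeff lin_def ac_simps)

lemma hom_eval_sym_mono_homogeneous:
  assumes "i \<le> 2*r" "y2 \<noteq> 0"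
  shows "hom_eval r (sym_mono r i v w) y1 y2
       = (v$1 * y1 + v$2 * y2) ^ i * (w$1 * y1 + w$2 * y2) ^ (2*r - i)"
proof -
  have "hom_eval r (sym_mono r i v w) y1 y2
      = (y2 * (v$2 + v$1 * (y1/y2))) ^ i * (y2 * (w$2 + w$1 * (y1/y2))) ^ (2*r - i)"
    using hom_eval_dehomogenize[OF assms(2)] hom_eval_sym_mono[OF assms(1)] assms(1)
    by (simp add: power_mult_distrib power_add[symmetric])
  then show ?thesis using assms(2) by (simp add: distrib_left ac_simps)
qed

lemma Lrep_sym_mono:
  assumes "det M \<noteq> 0" "i \<le> 2*r"
  shows "Lrep r M (sym_mono r i v w) = sym_mono r i (M *v v) (M *v w)"
proof (rule Vr_eqI_off_root[OF Lrep_in_Vr sym_mono_in_Vr[OF assms(2)] det_nonzero_second_column[OF assms(1)]])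
  fix t assume t: "M$2$2 + M$1$2 * t \<noteq> 0"
  show "hom_eval r (Lrep r M (sym_mono r i v w)) t 1 = hom_eval r (sym_mono r i (M *v v) (M *v w)) t 1"
    unfolding hom_eval_Lrep hom_eval_sym_mono_homogeneous[OF assms(2) t] hom_eval_sym_mono[OF assms(2)]
    by (simp add: algebra_simps)
qed

lemma lin_scaleR: "lin (a *\<^sub>R v) = smult a (lin v)"
  by (simp add: lin_def)

lemma lin_add: "lin (v + w) = lin v + lin w"
  by (simp add: lin_def)

lemma sym_mono_scaleR:
  "sym_mono r i (a *\<^sub>R v) (b *\<^sub>R w) = (\<lambda>k. (a ^ i * b ^ (2*r - i)) * sym_mono r i v w k)"
  by (simp add: sym_mono_def lin_scaleR smult_power fun_eq_iff)

lemma Lrep_colmat_eq_sum: "Lrep r (colmat v w) z = (\<lambda>k. \<Sum>i\<le>2*r. z i * sym_mono r i v w k)"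
proof (rule Vr_eqI[OF Lrep_in_Vr])
  show "(\<lambda>k. \<Sum>i\<le>2*r. z i * sym_mono r i v w k) \<in> Vr r"
    by (intro Vr_sum Vr_scale sym_mono_in_Vr) auto
  fix t
  have "hom_eval r (\<lambda>k. \<Sum>i\<le>2*r. z i * sym_mono r i v w k) t 1
      = (\<Sum>i\<le>2*r. z i * ((v$2 + v$1 * t) ^ i * (w$2 + w$1 * t) ^ (2*r - i)))"
    by (simp add: hom_eval_sum hom_eval_scale hom_eval_sym_mono)
  moreover have "hom_eval r (Lrep r (colmat v w) z) t 1
      = (\<Sum>i\<le>2*r. z i * ((v$2 + v$1 * t) ^ i * (w$2 + w$1 * t) ^ (2*r - i)))"
    unfolding hom_eval_Lrep by (simp add: hom_eval_def mult.assoc)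
  ultimately show "hom_eval r (Lrep r (colmat v w) z) t 1
      = hom_eval r (\<lambda>k. \<Sum>i\<le>2*r. z i * sym_mono r i v w k) t 1"
    by simp
qed

lemma coeff_linear_poly_power:
  "coeff ([:a, b:] ^ n) k = (if k \<le> n then of_nat (n choose k) * b ^ k * (a::real) ^ (n - k) else 0)"
proof -
  let ?R = "(\<Sum>j\<le>n. monom (of_nat (n choose j) * b ^ j * a ^ (n - j)) j)"
  have "poly ([:a, b:] ^ n) = poly ?R"
  proof
    fix t
    have "poly ([:a, b:] ^ n) t = (b * t + a) ^ n" by (simp add: algebra_simps)
    also have "\<dots> = (\<Sum>j\<le>n. of_nat (n choose j) * (b*t) ^ j * a ^ (n - j))" by (rule binomial_ring)
    also have "\<dots> = poly ?R t" by (simp add: poly_sum poly_monom power_mult_distrib ac_simps)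
    finally show "poly ([:a, b:] ^ n) t = poly ?R t" .
  qed
  then have "[:a, b:] ^ n = ?R" by (simp add: poly_eq_poly_eq_iff)
  then show ?thesis by (simp add: coeff_sum coeff_monom)
qed

lemma Bform_sum_right: "finite J \<Longrightarrow> Bform r c (\<lambda>k. \<Sum>j\<in>J. f j k) = (\<Sum>j\<in>J. Bform r c (f j))"
  by (simp add: Bform_def sum_distrib_left sum_distrib_right sum_divide_distrib sum.swap[of _ J])

lemma Bform_sum_left: "finite J \<Longrightarrow> Bform r (\<lambda>k. \<Sum>j\<in>J. f j k) d = (\<Sum>j\<in>J. Bform r (f j) d)"
  by (simp add: Bform_def sum_distrib_left sum_distrib_right sum_divide_distrib sum.swap[of _ J])

lemma Bform_scale_right: "Bform r c (\<lambda>k. a * d k) = a * Bform r c d"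
  by (simp add: Bform_def sum_distrib_left algebra_simps)

lemma Bform_scale_left: "Bform r (\<lambda>k. a * c k) d = a * Bform r c d"
  by (simp add: Bform_def sum_distrib_left algebra_simps)

lemma Bform_lin_power:
  "Bform r c (coeff (lin w ^ (2*r))) = (-1) ^ r * hom_eval r c (- w$2) (w$1)"
proof -
  have "(-1) ^ k * c k * coeff (lin w ^ (2*r)) (2*r - k) / real (2*r choose k)
      = c k * (- w$2) ^ k * (w$1) ^ (2*r - k)" if k: "k \<le> 2*r" for k
  proof -
    have "coeff (lin w ^ (2*r)) (2*r - k) = real (2*r choose k) * w$1 ^ (2*r - k) * w$2 ^ k"
      using k binomial_symmetric[OF k] by (simp add: lin_def coeff_linear_poly_power)
    then show ?thesis using k by (simp add: power_minus' field_simps)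
  qed
  then have "(\<Sum>k\<le>2*r. (-1) ^ k * c k * coeff (lin w ^ (2*r)) (2*r - k) / real (2*r choose k))
      = (\<Sum>k\<le>2*r. c k * (- w$2) ^ k * (w$1) ^ (2*r - k))"
    by (intro sum.cong) auto
  then show ?thesis unfolding Bform_def hom_eval_def by simp
qed

lemma coeff_lin_power_binomial:
  "coeff ((lin v + smult s (lin w)) ^ (2*r))
     = (\<lambda>j. \<Sum>k\<le>2*r. (real (2*r choose k) * s ^ k) * sym_mono r (2*r - k) v w j)"
proof -
  have "(lin v + smult s (lin w)) ^ (2*r)
      = (\<Sum>k\<le>2*r. of_nat (2*r choose k) * smult s (lin w) ^ k * lin v ^ (2*r - k))"
    using binomial_ring[of "smult s (lin w)" "lin v"] by (simp add: add.commute)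
  also have "\<dots> = (\<Sum>k\<le>2*r. smult (real (2*r choose k) * s ^ k)
                     (lin v ^ (2*r - k) * lin w ^ (2*r - (2*r - k))))"
    by (rule sum.cong) (auto simp: of_nat_poly smult_power ac_simps)
  finally show ?thesis by (simp add: coeff_sum sym_mono_def fun_eq_iff)
qed

text \<open>Pair against \<open>(v + s w)^(2r)\<close> and compare coefficients in \<open>s\<close>.\<close>

lemma Bform_sym_mono_middle:
  assumes D: "det2 v w \<noteq> 0" and i: "i \<le> 2*r"
  shows "Bform r (sym_mono r i v w) (sym_mono r r v w)
       = (if i = r then det2 v w ^ (2*r) / real (2*r choose r) else 0)"
proof -
  define f where "f k = (if k \<le> 2*r
      then real (2*r choose k) * Bform r (sym_mono r i v w) (sym_mono r (2*r - k) v w) else 0)" for k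
  define g where "g k = (if k = i then (-1) ^ r * (- det2 v w) ^ i * det2 v w ^ (2*r - i) else 0)" for k
  have "f = g"
  proof (rule Vr_eqI_off_root[of f r g "v$1" "w$1"])
    show "f \<in> Vr r" by (simp add: f_def Vr_def)
    show "g \<in> Vr r" using i by (simp add: g_def Vr_def)
    show "v$1 \<noteq> 0 \<or> w$1 \<noteq> 0" using D by (auto simp: det2_def)
    fix s assume s: "v$1 + w$1 * s \<noteq> 0"
    have "hom_eval r f s 1 = (\<Sum>k\<le>2*r. real (2*r choose k) * s ^ k
        * Bform r (sym_mono r i v w) (sym_mono r (2*r - k) v w))"
      by (simp add: hom_eval_def f_def ac_simps)
    also have "\<dots> = Bform r (sym_mono r i v w) (coeff (lin (v + s *\<^sub>R w) ^ (2*r)))"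
      by (simp add: lin_add lin_scaleR coeff_lin_power_binomial Bform_sum_right Bform_scale_right)
    also have "\<dots> = (-1) ^ r * hom_eval r (sym_mono r i v w) (- (v + s *\<^sub>R w)$2) ((v + s *\<^sub>R w)$1)"
      by (rule Bform_lin_power)
    also have "\<dots> = (-1) ^ r * ((- det2 v w * s) ^ i * det2 v w ^ (2*r - i))"
      using s i by (subst hom_eval_sym_mono_homogeneous) (auto simp: det2_def algebra_simps)
    also have "\<dots> = hom_eval r g s 1"
    proof -
      have "hom_eval r g s 1 = (\<Sum>k\<le>2*r. if k = i
          then (-1) ^ r * (- det2 v w) ^ i * det2 v w ^ (2*r - i) * s ^ k else 0)"
        unfolding hom_eval_def g_def by (rule sum.cong) auto
      then show ?thesis using i by (simp add: sum.delta power_mult_distrib[symmetric])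
    qed
    finally show "hom_eval r f s 1 = hom_eval r g s 1" .
  qed
  then have "f r = g r" by simp
  then show ?thesis
    by (auto simp: f_def g_def field_simps power_add[symmetric] mult_2 mult_2_right power_minus'
        split: if_splits)
qed

lemma Bform_sym_mono_middle_pos:
  assumes "det2 v w \<noteq> 0"
  shows "Bform r (sym_mono r r v w) (sym_mono r r v w) > 0"
  using Bform_sym_mono_middle[OF assms, of r r] assms by (simp add: power_mult zero_less_power2)

section \<open>Eigenframes, the neutral vector and eigencoordinates\<close>

definition eigenframe :: "mat2 \<Rightarrow> real \<Rightarrow> real^2 \<Rightarrow> real^2 \<Rightarrow> bool" where
  "eigenframe g l vm vp \<longleftrightarrow> 0 < \<bar>l\<bar> \<and> \<bar>l\<bar> < 1 \<and> g *v vp = l *\<^sub>R vp \<and> g *v vm = (1/l) *\<^sub>R vm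
     \<and> det2 vm vp > 0"

lemma eigenframe_eigenvector:
  assumes e: "eigenframe g l vm vp" and v: "g *v v = \<mu> *\<^sub>R v" "v \<noteq> 0"
  shows "(\<mu> = l \<and> (\<exists>b. v = b *\<^sub>R vp)) \<or> (\<mu> = 1/l \<and> (\<exists>a. v = a *\<^sub>R vm))"
proof -
  define D where "D = det2 vm vp"
  have D: "D > 0" using e by (simp add: eigenframe_def D_def)
  define a where "a = det2 v vp / D"
  define b where "b = det2 vm v / D"
  have vab: "v = a *\<^sub>R vm + b *\<^sub>R vp"
    unfolding a_def b_def D_def by (rule det2_cramer) (use D D_def in simp)
  have "g *v v = (a / l) *\<^sub>R vm + (b * l) *\<^sub>R vp"
    using e by (subst vab, subst matrix_vector_mult_lincomb) (simp add: eigenframe_def)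
  moreover have "\<mu> *\<^sub>R v = (\<mu> * a) *\<^sub>R vm + (\<mu> * b) *\<^sub>R vp"
    by (subst vab) (simp only: scaleR_add_right scaleR_scaleR)
  ultimately have eq: "(a / l) *\<^sub>R vm + (b * l) *\<^sub>R vp = (\<mu> * a) *\<^sub>R vm + (\<mu> * b) *\<^sub>R vp"
    using v(1) by simp
  have "a / l * D = \<mu> * a * D"
    using arg_cong[OF eq, of "\<lambda>z. det2 z vp"] by (simp only: det2_lincomb_left D_def)
  then have "a / l = \<mu> * a" using D by (metis mult_right_cancel less_irrefl)
  then have a: "a * (1/l - \<mu>) = 0" by (simp add: algebra_simps)
  have "b * l * D = \<mu> * b * D"
    using arg_cong[OF eq, of "\<lambda>z. det2 vm z"] by (simp only: det2_lincomb_right D_def)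
  then have "b * l = \<mu> * b" using D by (metis mult_right_cancel less_irrefl)
  then have b: "b * (l - \<mu>) = 0" by (simp add: algebra_simps)
  have "l \<noteq> 1/l"
  proof
    assume "l = 1/l"
    then have "\<bar>l\<bar> * \<bar>l\<bar> = 1" using e by (auto simp: eigenframe_def field_simps abs_mult[symmetric])
    moreover have "\<bar>l\<bar> * \<bar>l\<bar> < 1" using e unfolding eigenframe_def
      by (metis abs_ge_zero mult_strict_mono' mult_1)
    ultimately show False by simp
  qed
  then show ?thesis using a b vab v(2) by (cases "a = 0") auto
qed

lemma is_neutral_pos_multiple:
  assumes e: "eigenframe g l vm vp" and x: "is_neutral r g x"
  obtains q where "q > 0" "x = (\<lambda>k. q * sym_mono r r vm vp k)"
proof -
  obtain lam vm' vp' c where h: "\<bar>lam\<bar> < 1" "vm' \<noteq> 0" "vp' \<noteq> 0"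
    "g *v vp' = lam *\<^sub>R vp'" "g *v vm' = (1 / lam) *\<^sub>R vm'"
    "vm'$1 * vp'$2 - vm'$2 * vp'$1 > 0" "c > 0" "x = (\<lambda>k. c * sym_prod r vm' vp' k)"
    using x unfolding is_neutral_def by blast
  have l1: "\<bar>1/l\<bar> > 1" and D: "det2 vm vp > 0" using e by (simp_all add: eigenframe_def)
  from eigenframe_eigenvector[OF e h(4) h(3)] l1 h(1) obtain b where b: "lam = l" "vp' = b *\<^sub>R vp"
    by auto
  have "1/l \<noteq> l"
  proof
    assume "1/l = l"
    then have "\<bar>1/l\<bar> = \<bar>l\<bar>" by simp
    then show False using l1 e by (simp add: eigenframe_def)
  qed
  with eigenframe_eigenvector[OF e _ h(2), of "1/lam"] h(5) b obtain a where a: "vm' = a *\<^sub>R vm"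
    by auto
  have "0 < (a * b) * det2 vm vp" using h(6) a b by (simp add: det2_def algebra_simps)
  then have "a * b > 0" using D by (metis zero_less_mult_pos2)
  then have "c * (a * b) ^ r > 0" using h(7) by simp
  then show thesis using h(8) a b
    by (intro that[of "c * (a * b) ^ r"])
      (simp_all add: sym_prod_eq_sym_mono sym_mono_scaleR power_mult_distrib mult_2 fun_eq_iff ac_simps)
qed

lemma neutral_eq:
  assumes e: "eigenframe g l vm vp"
  shows "neutral r g
       = (\<lambda>k. (1 / sqrt (Bform r (sym_mono r r vm vp) (sym_mono r r vm vp))) * sym_mono r r vm vp k)"
proof -
  define E where "E = sym_mono r r vm vp"
  define \<beta> where "\<beta> = Bform r E E"
  have D: "det2 vm vp > 0" using e by (simp add: eigenframe_def)
  have \<beta>: "\<beta> > 0" unfolding \<beta>_def E_def using D by (intro Bform_sym_mono_middle_pos) simp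
  define \<kappa> where "\<kappa> = 1 / sqrt \<beta>"
  have \<kappa>: "\<kappa> > 0" "\<kappa> * \<kappa> * \<beta> = 1" using \<beta> by (simp_all add: \<kappa>_def)
  have "vm \<noteq> 0" "vp \<noteq> 0" using D by (auto simp: det2_def)
  then have "is_neutral r g (\<lambda>k. \<kappa> * E k)"
    unfolding is_neutral_def using e \<kappa>
    by (intro exI[of _ l] exI[of _ vm] exI[of _ vp] exI[of _ \<kappa>])
      (auto simp: eigenframe_def det2_def sym_prod_eq_sym_mono E_def \<beta>_def
        Bform_scale_left Bform_scale_right)
  moreover have "x = (\<lambda>k. \<kappa> * E k)" if x: "is_neutral r g x" for x
  proof -
    obtain q where q: "q > 0" "x = (\<lambda>k. q * E k)"
      using is_neutral_pos_multiple[OF e x] unfolding E_def by blast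
    have "Bform r x x = 1" using x by (auto simp: is_neutral_def)
    then have "q * q * \<beta> = \<kappa> * \<kappa> * \<beta>"
      using \<kappa> unfolding q(2) Bform_scale_left Bform_scale_right \<beta>_def by simp
    then have "(q - \<kappa>) * (q + \<kappa>) = 0" using \<beta> by (simp add: algebra_simps)
    then show ?thesis using q \<kappa> by simp
  qed
  ultimately have "neutral r g = (\<lambda>k. \<kappa> * E k)" unfolding neutral_def by (rule the_equality)
  then show ?thesis by (simp add: \<kappa>_def \<beta>_def E_def)
qed

text \<open>Coordinates of \<open>x\<close> with respect to the basis \<open>v^i w^(2r-i)\<close> of \<open>Vr r\<close>.\<close>

definition fcoord :: "nat \<Rightarrow> real^2 \<Rightarrow> real^2 \<Rightarrow> Vvec \<Rightarrow> Vvec" where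
  "fcoord r v w x = Lrep r (colmat_inv v w) x"

lemma fcoord_in_Vr: "fcoord r v w x \<in> Vr r"
  by (simp add: fcoord_def Lrep_in_Vr)

lemma Lrep_colmat_fcoord: "det2 v w \<noteq> 0 \<Longrightarrow> x \<in> Vr r \<Longrightarrow> Lrep r (colmat v w) (fcoord r v w x) = x"
  unfolding fcoord_def by (simp add: Lrep_mult det_colmat colmat_mult_colmat_inv Lrep_id)

lemma fcoord_Lrep_colmat: "det2 v w \<noteq> 0 \<Longrightarrow> z \<in> Vr r \<Longrightarrow> fcoord r v w (Lrep r (colmat v w) z) = z"
  unfolding fcoord_def by (simp add: Lrep_mult det_colmat_inv_nonzero colmat_inv_mult_colmat Lrep_id)

lemma fcoord_eq_sum: "det2 v w \<noteq> 0 \<Longrightarrow> x \<in> Vr r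
    \<Longrightarrow> x = (\<lambda>k. \<Sum>i\<le>2*r. fcoord r v w x i * sym_mono r i v w k)"
  by (metis Lrep_colmat_fcoord Lrep_colmat_eq_sum)

lemma fcoord_inj: "det2 v w \<noteq> 0 \<Longrightarrow> x \<in> Vr r \<Longrightarrow> y \<in> Vr r \<Longrightarrow> fcoord r v w x = fcoord r v w y \<Longrightarrow> x = y"
  by (metis Lrep_colmat_fcoord)

lemma fcoord_lincomb:
  "fcoord r v w (\<lambda>k. a * c k + b * d k) = (\<lambda>k. a * fcoord r v w c k + b * fcoord r v w d k)"
  by (simp add: fcoord_def Lrep_lincomb)

lemma fcoord_add: "fcoord r v w (\<lambda>k. c k + d k) = (\<lambda>k. fcoord r v w c k + fcoord r v w d k)"
  by (simp add: fcoord_def Lrep_add)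

lemma fcoord_diff: "fcoord r v w (\<lambda>k. c k - d k) = (\<lambda>k. fcoord r v w c k - fcoord r v w d k)"
  by (simp add: fcoord_def Lrep_diff)

lemma fcoord_sum:
  "finite I \<Longrightarrow> fcoord r v w (\<lambda>k. \<Sum>i\<in>I. c i * f i k) = (\<lambda>k. \<Sum>i\<in>I. c i * fcoord r v w (f i) k)"
  by (simp add: fcoord_def Lrep_sum Lrep_scale)

lemma fcoord_sym_mono:
  "det2 v w \<noteq> 0 \<Longrightarrow> i \<le> 2*r
    \<Longrightarrow> fcoord r v w (sym_mono r i a b) = sym_mono r i (colmat_inv v w *v a) (colmat_inv v w *v b)"
  by (simp add: fcoord_def Lrep_sym_mono det_colmat_inv_nonzero)

lemma margulis_eq_pos_multiple:
  assumes e: "eigenframe g l vm vp" and ug: "u g \<in> Vr r"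
  shows "\<exists>\<beta>>0. margulis r u g = \<beta> * fcoord r vm vp (u g) r"
proof -
  define E where "E = sym_mono r r vm vp"
  define \<beta> where "\<beta> = Bform r E E"
  define z where "z = fcoord r vm vp (u g)"
  have D: "det2 vm vp \<noteq> 0" using e by (simp add: eigenframe_def)
  have \<beta>: "\<beta> > 0" unfolding \<beta>_def E_def using D by (rule Bform_sym_mono_middle_pos)
  have "margulis r u g = (1 / sqrt \<beta>) * (\<Sum>i\<le>2*r. z i * Bform r (sym_mono r i vm vp) E)"
    unfolding margulis_def neutral_eq[OF e] Bform_scale_right E_def[symmetric] \<beta>_def[symmetric]
    by (subst fcoord_eq_sum[OF D ug]) (simp add: Bform_sum_left Bform_scale_left z_def)
  also have "(\<Sum>i\<le>2*r. z i * Bform r (sym_mono r i vm vp) E) = z r * \<beta>"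
    unfolding E_def \<beta>_def by (simp add: Bform_sym_mono_middle[OF D] if_distrib sum.delta cong: if_cong)
  finally have "margulis r u g = z r * \<beta> / sqrt \<beta>" by simp
  also have "\<dots> = sqrt \<beta> * z r" using \<beta> by (simp add: field_simps real_div_sqrt)
  finally show ?thesis using \<beta> unfolding z_def by (intro exI[of _ "sqrt \<beta>"]) simp
qed

section \<open>Affine dynamics in eigencoordinates\<close>

text \<open>In the eigenbasis \<open>vm^i vp^(2r-i)\<close> of an eigenframe, \<open>g\<close> acts diagonally with weight
  \<open>l^(2r-2i)\<close> on the \<open>i\<close>-th coordinate; coordinate \<open>r\<close> is neutral.\<close>

definition weight :: "nat \<Rightarrow> real \<Rightarrow> nat \<Rightarrow> real" where
  "weight r l k = (1/l) ^ k * l ^ (2*r - k)"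

definition hdiag :: "real \<Rightarrow> mat2" where
  "hdiag l = (\<chi> i j. if i = j then (if i = 1 then 1/l else l) else 0)"

lemma hdiag_nth [simp]: "hdiag l $1$1 = 1/l" "hdiag l $1$2 = 0" "hdiag l $2$1 = 0" "hdiag l $2$2 = l"
  by (simp_all add: hdiag_def)

lemma Lrep_hdiag:
  assumes "z \<in> Vr r"
  shows "Lrep r (hdiag l) z = (\<lambda>k. weight r l k * z k)"
proof (rule Vr_eqI[OF Lrep_in_Vr])
  show "(\<lambda>k. weight r l k * z k) \<in> Vr r" using assms by (rule Vr_pointwise_mult)
  show "hom_eval r (Lrep r (hdiag l) z) t 1 = hom_eval r (\<lambda>k. weight r l k * z k) t 1" for t
    unfolding hom_eval_Lrep by (simp add: hom_eval_def weight_def power_divide ac_simps)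
qed

lemma eigenframe_mult_colmat:
  assumes e: "eigenframe g l vm vp"
  shows "g ** colmat vm vp = colmat vm vp ** hdiag l"
proof -
  have ev: "g *v vp = l *\<^sub>R vp" "g *v vm = (1/l) *\<^sub>R vm" using e by (simp_all add: eigenframe_def)
  have "vm$1 * g$i$1 + vm$2 * g$i$2 = vm$i / l" "vp$1 * g$i$1 + vp$2 * g$i$2 = l * vp$i" for i
    using arg_cong[OF ev(2), of "\<lambda>x. x$i"] arg_cong[OF ev(1), of "\<lambda>x. x$i"]
    by (simp_all add: mult.commute)
  then show ?thesis by (intro mat2_eqI) (simp_all add: mult.commute)
qed

lemma eigenframe_det:
  assumes e: "eigenframe g l vm vp"
  shows "det g = 1"
proof -
  have "det g * det2 vm vp = det2 vm vp * det (hdiag l)"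
    using arg_cong[where f = det, OF eigenframe_mult_colmat[OF e]] by (simp only: det_mul det_colmat)
  moreover have "det (hdiag l) = 1" "det2 vm vp \<noteq> 0" using e by (simp_all add: det_2 eigenframe_def)
  ultimately show ?thesis by simp
qed

lemma colmat_inv_mult_eigenframe:
  assumes e: "eigenframe g l vm vp"
  shows "colmat_inv vm vp ** g = hdiag l ** colmat_inv vm vp"
proof -
  have D: "det2 vm vp \<noteq> 0" using e by (simp add: eigenframe_def)
  have "colmat_inv vm vp ** g = colmat_inv vm vp ** g ** (colmat vm vp ** colmat_inv vm vp)"
    using D by (simp add: colmat_mult_colmat_inv)
  also have "\<dots> = colmat_inv vm vp ** (g ** colmat vm vp) ** colmat_inv vm vp"
    by (simp add: matrix_mul_assoc)
  also have "\<dots> = (colmat_inv vm vp ** colmat vm vp) ** hdiag l ** colmat_inv vm vp"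
    unfolding eigenframe_mult_colmat[OF e] by (simp add: matrix_mul_assoc)
  also have "\<dots> = hdiag l ** colmat_inv vm vp"
    using D by (simp add: colmat_inv_mult_colmat)
  finally show ?thesis .
qed

lemma fcoord_Lrep_eigenframe:
  assumes e: "eigenframe g l vm vp"
  shows "fcoord r vm vp (Lrep r g x) = (\<lambda>k. weight r l k * fcoord r vm vp x k)"
proof -
  have D: "det2 vm vp \<noteq> 0" and l: "l \<noteq> 0" using e by (auto simp: eigenframe_def)
  have "fcoord r vm vp (Lrep r g x) = Lrep r (colmat_inv vm vp ** g) x"
    unfolding fcoord_def using D by (simp add: Lrep_mult det_colmat_inv_nonzero)
  also have "\<dots> = Lrep r (hdiag l) (fcoord r vm vp x)"
    unfolding colmat_inv_mult_eigenframe[OF e] fcoord_def using l by (simp add: Lrep_mult det_2)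
  also have "\<dots> = (\<lambda>k. weight r l k * fcoord r vm vp x k)" by (rule Lrep_hdiag[OF fcoord_in_Vr])
  finally show ?thesis .
qed

lemma weight_below: "k \<le> r \<Longrightarrow> l \<noteq> 0 \<Longrightarrow> weight r l k = (l\<^sup>2) ^ (r - k)"
proof -
  assume k: "k \<le> r" and l: "l \<noteq> 0"
  have "2*r - k = 2*(r - k) + k" using k by simp
  then have "l ^ (2*r - k) = (l\<^sup>2) ^ (r - k) * l ^ k" by (simp add: power_add power_mult)
  then show ?thesis using l by (simp add: weight_def power_one_over)
qed

lemma weight_above: "r \<le> k \<Longrightarrow> k \<le> 2*r \<Longrightarrow> l \<noteq> 0 \<Longrightarrow> 1 / weight r l k = (l\<^sup>2) ^ (k - r)"
proof -
  assume k: "r \<le> k" "k \<le> 2*r" and l: "l \<noteq> 0"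
  have "k = 2*(k - r) + (2*r - k)" using k by simp
  then have "l ^ k = (l\<^sup>2) ^ (k - r) * l ^ (2*r - k)" by (metis power_add power_mult)
  then show ?thesis using l by (simp add: weight_def power_one_over)
qed

lemma weight_middle: "l \<noteq> 0 \<Longrightarrow> weight r l r = 1"
  using weight_below[of r r l] by simp

lemma power_le_base_if_less_1: "0 \<le> x \<Longrightarrow> x < 1 \<Longrightarrow> 0 < n \<Longrightarrow> x ^ n \<le> (x::real)"
  using power_decreasing[of 1 n x] by simp

lemma weight_below_le: "k < r \<Longrightarrow> \<bar>l\<bar> < 1 \<Longrightarrow> l \<noteq> 0 \<Longrightarrow> \<bar>weight r l k\<bar> \<le> l\<^sup>2"
  by (simp add: weight_below power_le_base_if_less_1 abs_square_less_1)

lemma inverse_weight_above_le: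
  "r < k \<Longrightarrow> k \<le> 2*r \<Longrightarrow> \<bar>l\<bar> < 1 \<Longrightarrow> l \<noteq> 0 \<Longrightarrow> \<bar>1 / weight r l k\<bar> \<le> l\<^sup>2"
  by (simp add: weight_above power_le_base_if_less_1 abs_square_less_1 del: abs_divide)

lemma weight_ne_1:
  assumes "k \<noteq> r" "k \<le> 2*r" "\<bar>l\<bar> < 1" "l \<noteq> 0"
  shows "weight r l k \<noteq> 1"
proof
  assume w: "weight r l k = 1"
  have "l\<^sup>2 < 1" using assms(3) by (simp add: abs_square_less_1)
  then show False
    using w assms weight_below_le[of k r l] inverse_weight_above_le[of r k l] by (cases "k < r") auto
qed

fun mat_pow :: "mat2 \<Rightarrow> nat \<Rightarrow> mat2" where
  "mat_pow g 0 = mat 1"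
| "mat_pow g (Suc m) = g ** mat_pow g m"

lemma psl_subgroupD:
  assumes "psl_subgroup G"
  shows "\<And>g. g \<in> G \<Longrightarrow> det g = 1" "mat 1 \<in> G" "\<And>a b. a \<in> G \<Longrightarrow> b \<in> G \<Longrightarrow> a ** b \<in> G"
    "\<And>a. a \<in> G \<Longrightarrow> matrix_inv a \<in> G"
  using assms unfolding psl_subgroup_def SL2_def by auto

lemma mat_pow_in: "psl_subgroup G \<Longrightarrow> g \<in> G \<Longrightarrow> mat_pow g m \<in> G"
  by (induction m) (auto dest: psl_subgroupD)

lemma mat_pow_eigenvector: "g *v v = c *\<^sub>R v \<Longrightarrow> mat_pow g m *v v = (c ^ m) *\<^sub>R v"
  by (induction m) (simp_all add: matrix_vector_mul_assoc[symmetric] matrix_vector_mult_scaleR)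

lemma cocycle_id:
  assumes G: "psl_subgroup G" and u: "cocycle r G u"
  shows "u (mat 1) = (\<lambda>k. 0)"
proof -
  have I: "mat 1 \<in> G" using psl_subgroupD[OF G] by blast
  then have "u (mat 1 ** mat 1) = (\<lambda>k. u (mat 1) k + Lrep r (mat 1) (u (mat 1)) k)"
    using u unfolding cocycle_def by blast
  then show ?thesis using Lrep_id u I by (simp add: cocycle_def fun_eq_iff)
qed

lemma aff_in_Vr: "cocycle r G u \<Longrightarrow> g \<in> G \<Longrightarrow> aff r u g x \<in> Vr r"
  using Lrep_in_Vr[of r g x] by (auto simp: aff_def cocycle_def Vr_def)

lemma aff_iter_in_Vr: "cocycle r G u \<Longrightarrow> g \<in> G \<Longrightarrow> x \<in> Vr r \<Longrightarrow> (aff r u g ^^ n) x \<in> Vr r"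
  by (induction n) (auto intro: aff_in_Vr)

lemma aff_mult:
  assumes G: "psl_subgroup G" and u: "cocycle r G u" and g: "g \<in> G" and h: "h \<in> G"
  shows "aff r u (g ** h) x = aff r u g (aff r u h x)"
proof -
  have "det g \<noteq> 0" using psl_subgroupD(1)[OF G g] by simp
  then have "aff r u (g ** h) x = (\<lambda>k. Lrep r g (Lrep r h x) k + (u g k + Lrep r g (u h) k))"
    using u g h by (simp add: aff_def cocycle_def Lrep_mult)
  then show ?thesis by (simp add: aff_def Lrep_add fun_eq_iff ac_simps)
qed

lemma aff_mat_pow:
  assumes G: "psl_subgroup G" and u: "cocycle r G u" and g: "g \<in> G" and x: "x \<in> Vr r"
  shows "aff r u (mat_pow g m) x = (aff r u g ^^ m) x"
proof (induction m)
  case 0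
  then show ?case using cocycle_id[OF G u] Lrep_id[OF x] by (simp add: aff_def)
next
  case (Suc m)
  then show ?case using aff_mult[OF G u g mat_pow_in[OF G g]] by simp
qed

lemma fcoord_aff_iter:
  assumes e: "eigenframe g l vm vp"
  shows "fcoord r vm vp ((aff r u g ^^ m) x) k =
    weight r l k ^ m * fcoord r vm vp x k + fcoord r vm vp (u g) k * (\<Sum>j<m. weight r l k ^ j)"
proof (induction m)
  case (Suc m)
  have "fcoord r vm vp ((aff r u g ^^ Suc m) x) k
      = weight r l k * fcoord r vm vp ((aff r u g ^^ m) x) k + fcoord r vm vp (u g) k"
    by (simp add: aff_def fcoord_add fcoord_Lrep_eigenframe[OF e])
  then show ?case
    unfolding Suc sum.lessThan_Suc_shift by (simp add: algebra_simps sum_distrib_left)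
qed simp

lemma fcoord_aff_iter_middle:
  assumes e: "eigenframe g l vm vp"
  shows "fcoord r vm vp ((aff r u g ^^ m) x) r = fcoord r vm vp x r + real m * fcoord r vm vp (u g) r"
proof -
  have "l \<noteq> 0" using e by (simp add: eigenframe_def)
  then show ?thesis by (simp add: fcoord_aff_iter[OF e] weight_middle)
qed

lemma affine_iterate_eq:
  fixes w :: real
  assumes "w \<noteq> 1"
  shows "w ^ m * X + a * (\<Sum>j<m. w ^ j) = w ^ m * (X - a / (1 - w)) + a / (1 - w)"
proof -
  have "1 - w \<noteq> 0" using assms by simp
  then have "a * (\<Sum>j<m. w ^ j) = a * (1 - w ^ m) / (1 - w)"
    by (simp add: one_diff_power_eq)
  then show ?thesis by (simp add: algebra_simps diff_divide_distrib)
qed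

lemma fcoord_aff_iter_off_middle:
  fixes u :: "mat2 \<Rightarrow> Vvec"
  assumes e: "eigenframe g l vm vp" and k: "k \<noteq> r" "k \<le> 2*r"
  defines "c \<equiv> fcoord r vm vp (u g) k / (1 - weight r l k)"
  shows "fcoord r vm vp ((aff r u g ^^ m) x) k = weight r l k ^ m * (fcoord r vm vp x k - c) + c"
proof -
  have "weight r l k \<noteq> 1" using e k by (intro weight_ne_1) (auto simp: eigenframe_def)
  then show ?thesis unfolding fcoord_aff_iter[OF e] c_def by (rule affine_iterate_eq)
qed

section \<open>Bounded sequences and proper actions\<close>

definition coord_bounded :: "(nat \<Rightarrow> Vvec) \<Rightarrow> bool" where
  "coord_bounded x \<longleftrightarrow> (\<exists>R. \<forall>j k. \<bar>x j k\<bar> \<le> R)"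

lemma coord_boundedI:
  assumes x: "\<And>j. x j \<in> Vr r" and b: "\<And>k. k \<le> 2*r \<Longrightarrow> \<exists>R. \<forall>j. \<bar>x j k\<bar> \<le> R"
  shows "coord_bounded x"
proof -
  from b obtain R where R: "\<And>k j. k \<le> 2*r \<Longrightarrow> \<bar>x j k\<bar> \<le> R k" by metis
  have "\<bar>x j k\<bar> \<le> (\<Sum>i\<le>2*r. \<bar>R i\<bar>)" for j k
  proof (cases "k \<le> 2*r")
    case True
    have "\<bar>x j k\<bar> \<le> \<bar>R k\<bar>" using R[OF True, of j] by simp
    also have "\<dots> \<le> (\<Sum>i\<le>2*r. \<bar>R i\<bar>)" using True by (intro member_le_sum) auto
    finally show ?thesis .
  next
    case False
    then show ?thesis using x[of j] by (simp add: Vr_def sum_nonneg)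
  qed
  then show ?thesis unfolding coord_bounded_def by blast
qed

lemma coord_bounded_Lrep:
  assumes "coord_bounded z"
  shows "coord_bounded (\<lambda>j. Lrep r M (z j))"
proof (rule coord_boundedI[OF Lrep_in_Vr])
  obtain R where R: "\<And>j i. \<bar>z j i\<bar> \<le> R" using assms unfolding coord_bounded_def by blast
  define p where "p i = [: M$2$1, M$1$1 :] ^ i * [: M$2$2, M$1$2 :] ^ (2*r - i)" for i
  fix k
  have "\<bar>Lrep r M (z j) k\<bar> \<le> (\<Sum>i\<le>2*r. R * \<bar>coeff (p i) k\<bar>)" for j
  proof -
    have "\<bar>Lrep r M (z j) k\<bar> \<le> (\<Sum>i\<le>2*r. \<bar>z j i\<bar> * \<bar>coeff (p i) k\<bar>)"
      by (simp add: Lrep_def p_def coeff_sum abs_mult[symmetric] sum_abs)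
    also have "\<dots> \<le> (\<Sum>i\<le>2*r. R * \<bar>coeff (p i) k\<bar>)"
      using R by (intro sum_mono mult_right_mono) auto
    finally show ?thesis .
  qed
  then show "\<exists>R. \<forall>j. \<bar>Lrep r M (z j) k\<bar> \<le> R" by blast
qed

lemma coord_bounded_fcoordD:
  assumes "det2 v w \<noteq> 0" "\<And>j. x j \<in> Vr r" "coord_bounded (\<lambda>j. fcoord r v w (x j))"
  shows "coord_bounded x"
  using coord_bounded_Lrep[OF assms(3), of r "colmat v w"] by (simp add: Lrep_colmat_fcoord assms)

definition coord_box :: "nat \<Rightarrow> real \<Rightarrow> Vvec set" where
  "coord_box r R = PiE UNIV (\<lambda>k. if k \<le> 2*r then {-R..R} else {0})"

lemma compact_coord_box: "compact (coord_box r R)"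
proof -
  have "compactin (product_topology (\<lambda>i. euclidean) UNIV) (coord_box r R)"
    unfolding coord_box_def compactin_PiE by auto
  then show ?thesis by (simp add: euclidean_product_topology)
qed

lemma coord_box_subset_Vr: "coord_box r R \<subseteq> Vr r"
proof
  fix x assume "x \<in> coord_box r R"
  then have "x k \<in> (if k \<le> 2*r then {-R..R} else {0})" for k
    by (simp add: coord_box_def PiE_UNIV_domain Pi_iff)
  then show "x \<in> Vr r" unfolding Vr_def
  proof (intro CollectI allI impI)
    fix k assume "2*r < k" "\<And>k. x k \<in> (if k \<le> 2*r then {-R..R} else {0})"
    then show "x k = 0" by (metis not_le singletonD)
  qed
qed

lemma in_coord_box:
  assumes x: "x \<in> Vr r" and R: "\<And>k. \<bar>x k\<bar> \<le> R"
  shows "x \<in> coord_box r R"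
proof -
  have "x k \<in> (if k \<le> 2*r then {-R..R} else {0})" for k
    using x R[of k] by (auto simp: Vr_def abs_le_iff)
  then show ?thesis by (simp add: coord_box_def PiE_UNIV_domain Pi_iff)
qed

lemma not_acts_properly_if_bounded_returns:
  assumes inj: "inj gg" and G: "\<And>j. gg j \<in> G"
    and x: "\<And>j. x j \<in> Vr r" "coord_bounded x"
    and gx: "\<And>j. aff r u (gg j) (x j) \<in> Vr r" "coord_bounded (\<lambda>j. aff r u (gg j) (x j))"
  shows "\<not> acts_properly r G u"
proof
  assume proper: "acts_properly r G u"
  obtain R1 R2 where R1: "\<And>j k. \<bar>x j k\<bar> \<le> R1" and R2: "\<And>j k. \<bar>aff r u (gg j) (x j) k\<bar> \<le> R2"
    using x(2) gx(2) unfolding coord_bounded_def by blast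
  define K where "K = coord_box r (max R1 R2)"
  have "compact K" "K \<subseteq> Vr r" unfolding K_def by (rule compact_coord_box, rule coord_box_subset_Vr)
  then have fin: "finite {g \<in> G. aff r u g ` K \<inter> K \<noteq> {}}"
    using proper unfolding acts_properly_def by blast
  have "gg j \<in> {g \<in> G. aff r u g ` K \<inter> K \<noteq> {}}" for j
  proof -
    have "x j \<in> K" "aff r u (gg j) (x j) \<in> K"
      unfolding K_def using x(1) gx(1) R1 R2 by (simp_all add: in_coord_box le_max_iff_disj)
    then show ?thesis using G[of j] by blast
  qed
  then have "range gg \<subseteq> {g \<in> G. aff r u g ` K \<inter> K \<noteq> {}}" by blast
  then show False using range_inj_infinite[OF inj] fin finite_subset by blast
qed

lemma contraction_of_linear_growth_bounded:
  fixes c :: real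
  assumes c: "\<bar>c\<bar> < 1" and n: "\<And>j. j \<le> n j" and X: "\<And>j. \<bar>X j\<bar> \<le> C1 + C2 * real j"
  shows "\<exists>R. \<forall>j. \<bar>c ^ n j * (X j - q) + q\<bar> \<le> R"
proof -
  have "(\<lambda>j. real j * \<bar>c\<bar> ^ j) \<longlonglongrightarrow> 0" using c by (intro powser_times_n_limit_0) simp
  then have "Bseq (\<lambda>j. real j * \<bar>c\<bar> ^ j)" by (intro convergent_imp_Bseq convergentI)
  then obtain K where K: "\<And>j. \<bar>real j * \<bar>c\<bar> ^ j\<bar> \<le> K" unfolding Bseq_def by auto
  have "\<bar>c ^ n j * (X j - q) + q\<bar> \<le> (\<bar>C1\<bar> + \<bar>q\<bar>) + \<bar>C2\<bar> * K + \<bar>q\<bar>" for j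
  proof -
    have cj: "\<bar>c\<bar> ^ n j \<le> \<bar>c\<bar> ^ j" "\<bar>c\<bar> ^ j \<le> 1"
      using c by (simp_all add: power_decreasing[OF n] power_le_one)
    have "\<bar>X j - q\<bar> \<le> (C1 + \<bar>q\<bar>) + C2 * real j" using X[of j] by linarith
    then have "\<bar>c ^ n j * (X j - q)\<bar> \<le> \<bar>c\<bar> ^ j * ((C1 + \<bar>q\<bar>) + C2 * real j)"
      unfolding abs_mult power_abs using cj by (intro mult_mono) auto
    also have "\<dots> = \<bar>c\<bar> ^ j * (C1 + \<bar>q\<bar>) + C2 * (real j * \<bar>c\<bar> ^ j)" by (simp add: algebra_simps)
    also have "\<dots> \<le> \<bar>c\<bar> ^ j * (\<bar>C1\<bar> + \<bar>q\<bar>) + \<bar>C2\<bar> * (real j * \<bar>c\<bar> ^ j)"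
      by (intro add_mono mult_left_mono mult_right_mono) auto
    also have "\<dots> \<le> (\<bar>C1\<bar> + \<bar>q\<bar>) + \<bar>C2\<bar> * K"
    proof (rule add_mono)
      show "\<bar>c\<bar> ^ j * (\<bar>C1\<bar> + \<bar>q\<bar>) \<le> \<bar>C1\<bar> + \<bar>q\<bar>" using cj(2) by (simp add: mult_left_le_one_le)
      show "\<bar>C2\<bar> * (real j * \<bar>c\<bar> ^ j) \<le> \<bar>C2\<bar> * K" using K[of j] by (intro mult_left_mono) auto
    qed
    finally show ?thesis by linarith
  qed
  then show ?thesis by blast
qed
lemma bounded_preimages_under_powers:
  fixes u :: "mat2 \<Rightarrow> Vvec"
  assumes u: "cocycle r G u" and Y: "Y \<in> G" and eY: "eigenframe Y \<rho> wm wp"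
    and y: "\<And>j. y j \<in> Vr r" and n: "\<And>j. j \<le> n j"
    and below: "\<And>j k. k < r \<Longrightarrow> fcoord r wm wp (y j) k = fcoord r wm wp (u Y) k / (1 - weight r \<rho> k)"
    and middle: "\<And>j. fcoord r wm wp (y j) r = real (n j) * fcoord r wm wp (u Y) r"
    and above: "\<And>k. r < k \<Longrightarrow> \<exists>C1 C2. \<forall>j. \<bar>fcoord r wm wp (y j) k\<bar> \<le> C1 + C2 * real j"
  shows "\<exists>x. coord_bounded x \<and> (\<forall>j. x j \<in> Vr r \<and> (aff r u Y ^^ n j) (x j) = y j)"
proof -
  let ?c = "fcoord r wm wp" and ?w = "weight r \<rho>"
  have D: "det2 wm wp \<noteq> 0" and \<rho>: "\<rho> \<noteq> 0" "\<bar>\<rho>\<bar> < 1" using eY by (auto simp: eigenframe_def)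
  define q where "q k = ?c (u Y) k / (1 - ?w k)" for k
  \<comment> \<open>the \<open>(wm, wp)\<close>-coordinates of the preimage of \<open>y j\<close> under the \<open>n j\<close>-th iterate\<close>
  define \<xi> where "\<xi> j k = (if k = r then 0 else if k \<le> 2*r
      then (1 / ?w k) ^ n j * (?c (y j) k - q k) + q k else 0)" for j k
  have \<xi>: "\<xi> j \<in> Vr r" for j by (simp add: \<xi>_def Vr_def)
  define x where "x j = Lrep r (colmat wm wp) (\<xi> j)" for j
  have x: "x j \<in> Vr r" for j unfolding x_def by (rule Lrep_in_Vr)
  have "(aff r u Y ^^ n j) (x j) = y j" for j
  proof (rule fcoord_inj[OF D aff_iter_in_Vr[OF u Y x] y], rule ext)
    fix k
    have cx: "?c (x j) = \<xi> j" unfolding x_def by (rule fcoord_Lrep_colmat[OF D \<xi>])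
    consider "k = r" | "k \<noteq> r" "k \<le> 2*r" | "2*r < k" by linarith
    then show "?c ((aff r u Y ^^ n j) (x j)) k = ?c (y j) k"
    proof cases
      case 1
      then show ?thesis using middle by (simp add: fcoord_aff_iter_middle[OF eY] cx \<xi>_def)
    next
      case 2
      have "?w k \<noteq> 0" using \<rho> by (simp add: weight_def)
      then show ?thesis using 2
        by (simp add: fcoord_aff_iter_off_middle[OF eY 2] cx \<xi>_def q_def power_one_over)
    next
      case 3
      then show ?thesis using fcoord_in_Vr by (simp add: Vr_def)
    qed
  qed
  moreover have "coord_bounded \<xi>"
  proof (rule coord_boundedI[OF \<xi>])
    fix k assume k: "k \<le> 2*r"
    consider "k < r" | "k = r" | "r < k" by linarith
    then show "\<exists>R. \<forall>j. \<bar>\<xi> j k\<bar> \<le> R"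
    proof cases
      case 1
      then show ?thesis using below by (auto simp: \<xi>_def q_def)
    next
      case 2
      then show ?thesis by (auto simp: \<xi>_def)
    next
      case 3
      obtain C1 C2 where C: "\<And>j. \<bar>?c (y j) k\<bar> \<le> C1 + C2 * real j" using above[OF 3] by blast
      have "\<bar>1 / ?w k\<bar> \<le> \<rho>\<^sup>2" "\<rho>\<^sup>2 < 1"
        using inverse_weight_above_le[OF 3 k] \<rho> by (simp_all add: abs_square_less_1)
      then have "\<bar>1 / ?w k\<bar> < 1" by linarith
      then show ?thesis
        using contraction_of_linear_growth_bounded[OF _ n C, of "1 / ?w k" "q k"] 3 k
        by (simp add: \<xi>_def)
    qed
  qed
  then have "coord_bounded x" unfolding x_def by (rule coord_bounded_Lrep)
  ultimately show ?thesis using x by blast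
qed

lemma bounded_images_under_powers:
  fixes u :: "mat2 \<Rightarrow> Vvec"
  assumes u: "cocycle r G u" and A: "A \<in> G" and eA: "eigenframe A l vm vp"
    and y: "\<And>j. y j \<in> Vr r" and m: "\<And>j. j \<le> m j"
    and above: "\<And>j k. r < k \<Longrightarrow> k \<le> 2*r
      \<Longrightarrow> fcoord r vm vp (y j) k = fcoord r vm vp (u A) k / (1 - weight r l k)"
    and middle: "\<exists>R. \<forall>j. \<bar>fcoord r vm vp (y j) r + real (m j) * fcoord r vm vp (u A) r\<bar> \<le> R"
    and below: "\<And>k. k < r \<Longrightarrow> \<exists>C1 C2. \<forall>j. \<bar>fcoord r vm vp (y j) k\<bar> \<le> C1 + C2 * real j"
  shows "coord_bounded (\<lambda>j. (aff r u A ^^ m j) (y j))"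
proof -
  let ?c = "fcoord r vm vp" and ?w = "weight r l"
  have D: "det2 vm vp \<noteq> 0" and l: "l \<noteq> 0" "\<bar>l\<bar> < 1" using eA by (auto simp: eigenframe_def)
  define p where "p k = ?c (u A) k / (1 - ?w k)" for k
  have "coord_bounded (\<lambda>j. ?c ((aff r u A ^^ m j) (y j)))"
  proof (rule coord_boundedI[OF fcoord_in_Vr])
    fix k assume k: "k \<le> 2*r"
    consider "k < r" | "k = r" | "r < k" by linarith
    then show "\<exists>R. \<forall>j. \<bar>?c ((aff r u A ^^ m j) (y j)) k\<bar> \<le> R"
    proof cases
      case 1
      obtain C1 C2 where C: "\<And>j. \<bar>?c (y j) k\<bar> \<le> C1 + C2 * real j" using below[OF 1] by blast
      have "\<bar>?w k\<bar> \<le> l\<^sup>2" "l\<^sup>2 < 1" using weight_below_le[OF 1] l by (simp_all add: abs_square_less_1)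
      then have "\<bar>?w k\<bar> < 1" by linarith
      then show ?thesis
        using contraction_of_linear_growth_bounded[OF _ m C, of "?w k" "p k"] 1 k
        by (simp add: fcoord_aff_iter_off_middle[OF eA] p_def)
    next
      case 2
      then show ?thesis using middle by (simp add: fcoord_aff_iter_middle[OF eA])
    next
      case 3
      then have "?c ((aff r u A ^^ m j) (y j)) k = p k" for j
        using k by (simp add: fcoord_aff_iter_off_middle[OF eA] above p_def)
      then show ?thesis by auto
    qed
  qed
  then show ?thesis by (rule coord_bounded_fcoordD[OF D aff_iter_in_Vr[OF u A y]])
qed

section \<open>Two hyperbolic elements with opposite drifts\<close>

lemma coeff_x_power_mult: "coeff ([:0, 1:] ^ i * p) k = (if k < i then 0 else coeff p (k - i))"
  using coeff_monom_mult[of 1 i p k] by (simp add: monom_altdef)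

lemma fcoord_sym_mono_common_second:
  assumes D: "det2 vm vp \<noteq> 0" and i: "i \<le> 2*r"
  shows "fcoord r vm vp (sym_mono r i wm vp) k = (if k \<le> i
    then real (i choose k) * (det2 wm vp / det2 vm vp) ^ k * ((colmat_inv vm vp *v wm)$2) ^ (i - k) else 0)"
proof -
  define \<beta> where "\<beta> = colmat_inv vm vp *v wm"
  have "\<beta>$1 = det2 wm vp / det2 vm vp"
    unfolding \<beta>_def by (simp add: det2_def diff_divide_distrib algebra_simps)
  moreover have "fcoord r vm vp (sym_mono r i wm vp) = coeff (lin \<beta> ^ i * lin (vector [0, 1]) ^ (2*r - i))"
    by (subst fcoord_sym_mono[OF D i]) (simp add: colmat_inv_mult_second[OF D] sym_mono_def \<beta>_def)
  moreover have "lin (vector [0, 1]) = 1" by (simp add: lin_def one_pCons)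
  ultimately show ?thesis unfolding \<beta>_def[symmetric] lin_def by (simp add: coeff_linear_poly_power pCons_one)
qed

lemma fcoord_sym_mono_common_first:
  assumes D: "det2 wm wp \<noteq> 0" and i: "i \<le> 2*r"
  shows "fcoord r wm wp (sym_mono r i wm vp) k = (if k < i then 0
    else coeff ([:det2 wm vp / det2 wm wp, (colmat_inv wm wp *v vp)$1:] ^ (2*r - i)) (k - i))"
proof -
  define \<gamma> where "\<gamma> = colmat_inv wm wp *v vp"
  have "\<gamma>$2 = det2 wm vp / det2 wm wp"
    unfolding \<gamma>_def by (simp add: det2_def diff_divide_distrib algebra_simps)
  moreover have "fcoord r wm wp (sym_mono r i wm vp) = coeff (lin (vector [1, 0]) ^ i * lin \<gamma> ^ (2*r - i))"
    by (subst fcoord_sym_mono[OF D i]) (simp add: colmat_inv_mult_first[OF D] sym_mono_def \<gamma>_def)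
  moreover have "lin (vector [1, 0]) = [:0, 1:]" by (simp add: lin_def)
  ultimately show ?thesis unfolding \<gamma>_def[symmetric] lin_def by (simp add: coeff_x_power_mult)
qed

text \<open>Write \<open>P - Q\<close> in the mixed basis \<open>wm^i vp^(2r-i)\<close>: the terms with \<open>i \<le> r\<close> have vanishing
  \<open>(vm, vp)\<close>-coordinates above \<open>r\<close>, those with \<open>i > r\<close> vanishing \<open>(wm, wp)\<close>-coordinates below \<open>r\<close>.\<close>

lemma exists_prescribed_fcoords:
  assumes DA: "det2 vm vp \<noteq> 0" and DY: "det2 wm wp \<noteq> 0" and nd: "det2 wm vp \<noteq> 0"
  obtains y0 where "y0 \<in> Vr r" "\<And>k. r < k \<Longrightarrow> k \<le> 2*r \<Longrightarrow> fcoord r vm vp y0 k = p k"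
    "\<And>k. k < r \<Longrightarrow> fcoord r wm wp y0 k = q k"
proof -
  define pv where "pv k = (if r < k \<and> k \<le> 2*r then p k else 0)" for k
  define qv where "qv k = (if k < r then q k else 0)" for k
  have pv: "pv \<in> Vr r" and qv: "qv \<in> Vr r" by (simp_all add: pv_def qv_def Vr_def)
  define P where "P = Lrep r (colmat vm vp) pv"
  define Q where "Q = Lrep r (colmat wm wp) qv"
  define F where "F i = sym_mono r i wm vp" for i
  define c where "c = fcoord r wm vp (\<lambda>k. P k - Q k)"
  have "(\<lambda>k. P k - Q k) \<in> Vr r" unfolding P_def Q_def by (intro Vr_diff Lrep_in_Vr)
  then have PQ: "P k - Q k = (\<Sum>i\<le>2*r. c i * F i k)" for k
    using fcoord_eq_sum[OF nd] unfolding c_def F_def by metis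
  have split: "{..2*r} = {..r} \<union> {r<..2*r}" by auto
  have PQ2: "P k - Q k = (\<Sum>i\<le>r. c i * F i k) + (\<Sum>i\<in>{r<..2*r}. c i * F i k)" for k
    using PQ[of k] unfolding split by (subst (asm) sum.union_disjoint) auto
  define y0 where "y0 k = P k - (\<Sum>i\<le>r. c i * F i k)" for k
  have y0': "y0 = (\<lambda>k. Q k + (\<Sum>i\<in>{r<..2*r}. c i * F i k))"
  proof
    show "y0 k = Q k + (\<Sum>i\<in>{r<..2*r}. c i * F i k)" for k using PQ2[of k] unfolding y0_def by linarith
  qed
  show thesis
  proof
    show "y0 \<in> Vr r" unfolding y0_def P_def
      by (intro Vr_diff Lrep_in_Vr Vr_sum Vr_scale) (auto simp: F_def intro!: sym_mono_in_Vr)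
    show "fcoord r vm vp y0 k = p k" if k: "r < k" "k \<le> 2*r" for k
    proof -
      have "fcoord r vm vp y0 k = fcoord r vm vp P k - (\<Sum>i\<le>r. c i * fcoord r vm vp (F i) k)"
        unfolding y0_def fcoord_diff fcoord_sum[OF finite_atMost] ..
      moreover have "(\<Sum>i\<le>r. c i * fcoord r vm vp (F i) k) = 0"
        using k by (intro sum.neutral) (auto simp: F_def fcoord_sym_mono_common_second[OF DA])
      ultimately show ?thesis using k by (simp add: P_def fcoord_Lrep_colmat[OF DA pv] pv_def)
    qed
    show "fcoord r wm wp y0 k = q k" if k: "k < r" for k
    proof -
      have "fcoord r wm wp y0 k = fcoord r wm wp Q k + (\<Sum>i\<in>{r<..2*r}. c i * fcoord r wm wp (F i) k)"
        unfolding y0' fcoord_add fcoord_sum[OF finite_greaterThanAtMost] ..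
      moreover have "(\<Sum>i\<in>{r<..2*r}. c i * fcoord r wm wp (F i) k) = 0"
        using k by (intro sum.neutral) (auto simp: F_def fcoord_sym_mono_common_first[OF DY])
      ultimately show ?thesis using k by (simp add: Q_def fcoord_Lrep_colmat[OF DY qv] qv_def)
    qed
  qed
qed

lemma det2_mat_pow_left:
  assumes g: "det g = 1" "g *v v = l *\<^sub>R v" "l \<noteq> 0"
  shows "det2 (mat_pow g m *v x) v = (1/l) ^ m * det2 x v"
proof (induction m)
  case (Suc m)
  have "l * det2 (g *v y) v = det2 y v" for y
    using det2_matrix_vector_mult[of g y v] g(1,2) by (simp add: det2_scaleR_right)
  then have step: "det2 (g *v y) v = (1/l) * det2 y v" for y
    using g(3) by (metis nonzero_mult_div_cancel_left divide_inverse inverse_eq_divide mult.commute)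
  show ?case
    by (simp add: matrix_vector_mul_assoc[symmetric] step Suc.IH)
qed simp

lemma inj_mat_pow_products:
  fixes n m :: "nat \<Rightarrow> nat"
  assumes eA: "eigenframe A l vm vp" and eY: "eigenframe Y \<rho> wm wp" and nd: "det2 wm vp \<noteq> 0"
    and n: "strict_mono n" and m: "mono m"
  shows "inj (\<lambda>j. mat_pow A (m j) ** mat_pow Y (n j))"
proof (rule injI)
  define h where "h j = (1/l) ^ m j * (1/\<rho>) ^ n j" for j
  have l: "l \<noteq> 0" "1 < \<bar>1/l\<bar>" and \<rho>: "1 < \<bar>1/\<rho>\<bar>" using eA eY by (auto simp: eigenframe_def)
  have det: "det2 ((mat_pow A (m j) ** mat_pow Y (n j)) *v wm) vp = h j * det2 wm vp" for j
  proof -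
    have "mat_pow Y (n j) *v wm = (1/\<rho>) ^ n j *\<^sub>R wm"
      using eY by (intro mat_pow_eigenvector) (simp add: eigenframe_def)
    moreover have "det2 (mat_pow A (m j) *v wm) vp = (1/l) ^ m j * det2 wm vp"
      using eA l by (intro det2_mat_pow_left eigenframe_det) (auto simp: eigenframe_def)
    ultimately show ?thesis
      by (simp add: matrix_vector_mul_assoc[symmetric] matrix_vector_mult_scaleR h_def det2_scaleR_left)
  qed
  have h: "\<bar>h j1\<bar> < \<bar>h j2\<bar>" if "j1 < j2" for j1 j2
  proof -
    have "\<bar>1/l\<bar> ^ m j1 \<le> \<bar>1/l\<bar> ^ m j2" using monoD[OF m, of j1 j2] that l by (intro power_increasing) auto
    moreover have "\<bar>1/\<rho>\<bar> ^ n j1 < \<bar>1/\<rho>\<bar> ^ n j2"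
      using strict_monoD[OF n that] \<rho> by (intro power_strict_increasing)
    ultimately show ?thesis unfolding h_def abs_mult power_abs
      using l by (intro mult_le_less_imp_less) auto
  qed
  fix j1 j2
  assume "mat_pow A (m j1) ** mat_pow Y (n j1) = mat_pow A (m j2) ** mat_pow Y (n j2)"
  then have "h j1 * det2 wm vp = h j2 * det2 wm vp" by (metis det)
  then have "h j1 = h j2" using nd by simp
  then show "j1 = j2" using h[of j1 j2] h[of j2 j1] by (cases j1 j2 rule: linorder_cases) auto
qed

lemma exists_proportional_sequence:
  fixes \<theta> :: real
  assumes \<theta>: "\<theta> > 0"
  obtains N m where "N \<ge> 1" "mono m" "\<And>j. j \<le> m j" "\<And>j. \<bar>real (m j) - \<theta> * real (N * Suc j)\<bar> \<le> 1"
proof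
  define N where "N = nat \<lceil>1 / \<theta>\<rceil> + 1"
  define m where "m j = nat \<lfloor>\<theta> * real (N * Suc j)\<rfloor>" for j
  show "N \<ge> 1" by (simp add: N_def)
  have "real N \<ge> 1 / \<theta>" unfolding N_def by linarith
  then have "real N * \<theta> \<ge> 1" using \<theta> by (simp add: field_simps)
  then have large: "\<theta> * real (N * Suc j) \<ge> real j + 1" for j
    using mult_right_mono[of 1 "real N * \<theta>" "real j + 1"] by (simp add: algebra_simps)
  have "0 \<le> \<theta> * real (N * Suc j)" for j using \<theta> by simp
  then have m: "real (m j) = of_int \<lfloor>\<theta> * real (N * Suc j)\<rfloor>" for j
    unfolding m_def by simp
  show "\<bar>real (m j) - \<theta> * real (N * Suc j)\<bar> \<le> 1" for j
    unfolding m by linarith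
  show "j \<le> m j" for j
  proof -
    have "real j < real (m j)" using large[of j] unfolding m by linarith
    then show ?thesis by simp
  qed
  show "mono m"
    unfolding m_def mono_def using \<theta>
    by (intro allI impI nat_mono floor_mono mult_left_mono) (simp_all add: mult_left_mono)
qed
lemma fcoord_neutral_mono_mixed:
  assumes DA: "det2 vm vp > 0" and DY: "det2 wm wp > 0" and nd: "det2 wm vp \<noteq> 0"
  shows "\<And>k. r < k \<Longrightarrow> fcoord r vm vp (sym_mono r r wm vp) k = 0"
    and "\<And>k. k < r \<Longrightarrow> fcoord r wm wp (sym_mono r r wm vp) k = 0"
    and "fcoord r vm vp (sym_mono r r wm vp) r * fcoord r wm wp (sym_mono r r wm vp) r > 0"
proof -
  show "fcoord r vm vp (sym_mono r r wm vp) k = 0" if "r < k" for k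
    using that DA by (simp add: fcoord_sym_mono_common_second)
  show "fcoord r wm wp (sym_mono r r wm vp) k = 0" if "k < r" for k
    using that DY by (simp add: fcoord_sym_mono_common_first)
  have "fcoord r vm vp (sym_mono r r wm vp) r * fcoord r wm wp (sym_mono r r wm vp) r
      = (det2 wm vp ^ 2 / (det2 vm vp * det2 wm wp)) ^ r"
    using DA DY by (simp add: fcoord_sym_mono_common_second fcoord_sym_mono_common_first
        coeff_linear_poly_power mult_2 power_mult_distrib[symmetric] power2_eq_square)
  also have "\<dots> > 0" using DA DY nd by simp
  finally show "fcoord r vm vp (sym_mono r r wm vp) r * fcoord r wm wp (sym_mono r r wm vp) r > 0" .
qed

lemma exists_transverse_line:
  assumes DA: "det2 vm vp > 0" and DY: "det2 wm wp > 0" and nd: "det2 wm vp \<noteq> 0"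
  obtains \<psi> :: "real \<Rightarrow> Vvec" and \<kappa> where "\<kappa> > 0" "\<And>s. \<psi> s \<in> Vr r"
    "\<And>s k. r < k \<Longrightarrow> k \<le> 2*r \<Longrightarrow> fcoord r vm vp (\<psi> s) k = p k"
    "\<And>s k. k < r \<Longrightarrow> fcoord r wm wp (\<psi> s) k = q k"
    "\<And>s. fcoord r wm wp (\<psi> s) r = s"
    "\<And>s. fcoord r vm vp (\<psi> s) r = fcoord r vm vp (\<psi> 0) r + \<kappa> * s"
    "\<And>k. \<exists>\<alpha> \<beta>. \<forall>s. fcoord r vm vp (\<psi> s) k = \<alpha> + s * \<beta>"
    "\<And>k. \<exists>\<alpha> \<beta>. \<forall>s. fcoord r wm wp (\<psi> s) k = \<alpha> + s * \<beta>"
proof -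
  let ?cA = "fcoord r vm vp" and ?cY = "fcoord r wm wp"
  have D: "det2 vm vp \<noteq> 0" "det2 wm wp \<noteq> 0" using DA DY by auto
  obtain y0 where y0: "y0 \<in> Vr r" "\<And>k. r < k \<Longrightarrow> k \<le> 2*r \<Longrightarrow> ?cA y0 k = p k"
    "\<And>k. k < r \<Longrightarrow> ?cY y0 k = q k"
    by (rule exists_prescribed_fcoords[OF D nd, where r = r and p = p and q = q]) blast
  define d where "d = sym_mono r r wm vp"
  note d = fcoord_neutral_mono_mixed[where r = r, OF DA DY nd, folded d_def]
  define t where "t s = (s - ?cY y0 r) / ?cY d r" for s
  define \<psi> where "\<psi> s = (\<lambda>k. y0 k + t s * d k)" for s
  have c\<psi>: "fcoord r v w (\<psi> s) k = fcoord r v w y0 k + t s * fcoord r v w d k" for v w s k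
    using fcoord_lincomb[of r v w 1 y0 "t s" d] by (simp add: \<psi>_def)
  have BY: "?cY d r \<noteq> 0" using d(3) by auto
  have affine: "\<exists>\<alpha> \<beta>. \<forall>s. fcoord r v w (\<psi> s) k = \<alpha> + s * \<beta>" for v w k
    by (rule exI[of _ "fcoord r v w y0 k - ?cY y0 r / ?cY d r * fcoord r v w d k"],
        rule exI[of _ "fcoord r v w d k / ?cY d r"]) (use BY in \<open>simp add: c\<psi> t_def field_simps\<close>)
  show thesis
  proof (rule that[of "?cA d r / ?cY d r" \<psi>])
    show "?cA d r / ?cY d r > 0" using d(3) by (simp add: zero_less_divide_iff zero_less_mult_iff)
    show "\<psi> s \<in> Vr r" for s
      using Vr_lincomb[OF y0(1) sym_mono_in_Vr, where a = 1 and b = "t s"] by (simp add: \<psi>_def d_def)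
    show "?cA (\<psi> s) k = p k" if "r < k" "k \<le> 2*r" for s k using that by (simp add: c\<psi> d(1) y0(2))
    show "?cY (\<psi> s) k = q k" if "k < r" for s k using that by (simp add: c\<psi> d(2) y0(3))
    show "?cY (\<psi> s) r = s" for s using BY by (simp add: c\<psi> t_def)
    show "?cA (\<psi> s) r = ?cA (\<psi> 0) r + ?cA d r / ?cY d r * s" for s
      using BY by (simp add: c\<psi> t_def field_simps)
  qed (fact affine)+
qed

lemma affine_linear_growth: "\<exists>C1 C2. \<forall>j. \<bar>\<alpha> + real (N * Suc j) * b * \<beta>\<bar> \<le> C1 + C2 * real j"
proof -
  have "\<bar>\<alpha> + real (N * Suc j) * b * \<beta>\<bar> \<le> (\<bar>\<alpha>\<bar> + real N * \<bar>b * \<beta>\<bar>) + real N * \<bar>b * \<beta>\<bar> * real j" for j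
  proof -
    have "\<bar>\<alpha> + real (N * Suc j) * b * \<beta>\<bar> \<le> \<bar>\<alpha>\<bar> + real (N * Suc j) * \<bar>b * \<beta>\<bar>"
      using abs_triangle_ineq[of \<alpha> "real (N * Suc j) * (b * \<beta>)"] by (simp add: abs_mult mult.assoc)
    then show ?thesis by (simp add: algebra_simps)
  qed
  then show ?thesis by blast
qed

text \<open>The orbit points are \<open>x j\<close> and \<open>A^(m j) Y^(n j) x j\<close>, where \<open>y j = Y^(n j) x j\<close> moves
  along a line transverse to both eigenframes: \<open>Y^(n j)\<close> drifts the neutral \<open>(wm, wp)\<close>-coordinate
  by \<open>n j\<close> times a positive amount and \<open>A^(m j)\<close> brings the neutral \<open>(vm, vp)\<close>-coordinate back,
  since \<open>m j / n j\<close> approximates the ratio \<open>\<theta>\<close> of the drifts.\<close>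

lemma not_acts_properly_if_opposite_drifts:
  fixes u :: "mat2 \<Rightarrow> Vvec"
  assumes G: "psl_subgroup G" and u: "cocycle r G u" and A: "A \<in> G" and Y: "Y \<in> G"
    and eA: "eigenframe A l vm vp" and eY: "eigenframe Y \<rho> wm wp" and nd: "det2 wm vp \<noteq> 0"
    and neg: "fcoord r vm vp (u A) r < 0" and pos: "fcoord r wm wp (u Y) r > 0"
  shows "\<not> acts_properly r G u"
proof -
  let ?cA = "fcoord r vm vp" and ?cY = "fcoord r wm wp"
  define a where "a = ?cA (u A)"
  define b where "b = ?cY (u Y)"
  have DA: "det2 vm vp > 0" and DY: "det2 wm wp > 0" using eA eY by (simp_all add: eigenframe_def)
  obtain \<psi> \<kappa> where \<kappa>: "\<kappa> > 0" and \<psi>: "\<And>s. \<psi> s \<in> Vr r"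
    "\<And>s k. r < k \<Longrightarrow> k \<le> 2*r \<Longrightarrow> ?cA (\<psi> s) k = a k / (1 - weight r l k)"
    "\<And>s k. k < r \<Longrightarrow> ?cY (\<psi> s) k = b k / (1 - weight r \<rho> k)"
    "\<And>s. ?cY (\<psi> s) r = s" "\<And>s. ?cA (\<psi> s) r = ?cA (\<psi> 0) r + \<kappa> * s"
    and affine: "\<And>k. \<exists>\<alpha> \<beta>. \<forall>s. ?cA (\<psi> s) k = \<alpha> + s * \<beta>" "\<And>k. \<exists>\<alpha> \<beta>. \<forall>s. ?cY (\<psi> s) k = \<alpha> + s * \<beta>"
    by (rule exists_transverse_line[OF DA DY nd, where r = r and p = "\<lambda>k. a k / (1 - weight r l k)"
        and q = "\<lambda>k. b k / (1 - weight r \<rho> k)"]) blast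
  define \<theta> where "\<theta> = \<kappa> * b r / - a r"
  have "\<theta> > 0" using \<kappa> neg pos by (simp add: \<theta>_def a_def b_def divide_pos_neg)
  then obtain N m where N: "N \<ge> 1" and m: "mono m" "\<And>j. j \<le> m j"
    and m_close: "\<And>j. \<bar>real (m j) - \<theta> * real (N * Suc j)\<bar> \<le> 1"
    by (rule exists_proportional_sequence) blast
  define n where "n j = N * Suc j" for j
  have n: "strict_mono n" "\<And>j. j \<le> n j"
    using N mult_le_mono1[OF N] by (simp_all add: n_def strict_mono_def trans_le_add2)
  define y where "y j = \<psi> (real (n j) * b r)" for j
  have y: "y j \<in> Vr r" for j by (simp add: y_def \<psi>(1))
  have growth: "\<exists>C1 C2. \<forall>j. \<bar>fcoord r v w (y j) k\<bar> \<le> C1 + C2 * real j"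
    if line: "\<exists>\<alpha> \<beta>. \<forall>s. fcoord r v w (\<psi> s) k = \<alpha> + s * \<beta>" for v w k
  proof -
    obtain \<alpha> \<beta> where "\<And>s. fcoord r v w (\<psi> s) k = \<alpha> + s * \<beta>" using line by blast
    then show ?thesis using affine_linear_growth[of \<alpha> N "b r" \<beta>] by (simp add: y_def n_def)
  qed
  have "\<exists>x. coord_bounded x \<and> (\<forall>j. x j \<in> Vr r \<and> (aff r u Y ^^ n j) (x j) = y j)"
  proof (rule bounded_preimages_under_powers[OF u Y eY y n(2)])
    show "?cY (y j) k = ?cY (u Y) k / (1 - weight r \<rho> k)" if "k < r" for j k
      using \<psi>(3)[OF that] by (simp add: y_def b_def)
    show "?cY (y j) r = real (n j) * ?cY (u Y) r" for j by (simp add: y_def b_def \<psi>(4))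
    show "\<exists>C1 C2. \<forall>j. \<bar>?cY (y j) k\<bar> \<le> C1 + C2 * real j" for k by (rule growth[OF affine(2)])
  qed
  then obtain x where x: "coord_bounded x" "\<And>j. x j \<in> Vr r" "\<And>j. (aff r u Y ^^ n j) (x j) = y j"
    by blast
  have "?cA (y j) r + real (m j) * ?cA (u A) r = ?cA (\<psi> 0) r + a r * (real (m j) - \<theta> * real (n j))" for j
    using neg \<psi>(5)[of "real (n j) * b r"] by (simp add: y_def \<theta>_def a_def b_def field_simps)
  then have "\<bar>?cA (y j) r + real (m j) * ?cA (u A) r\<bar> \<le> \<bar>?cA (\<psi> 0) r\<bar> + \<bar>a r\<bar>" for j
    using m_close[of j] unfolding n_def
    by (simp add: abs_mult abs_triangle_ineq[THEN order_trans] mult_left_le)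
  then have images: "coord_bounded (\<lambda>j. (aff r u A ^^ m j) (y j))"
  proof (intro bounded_images_under_powers[OF u A eA y m(2)])
    show "?cA (y j) k = ?cA (u A) k / (1 - weight r l k)" if "r < k" "k \<le> 2*r" for j k
      using \<psi>(2)[OF that] by (simp add: y_def a_def)
    show "\<exists>C1 C2. \<forall>j. \<bar>?cA (y j) k\<bar> \<le> C1 + C2 * real j" for k by (rule growth[OF affine(1)])
  qed blast
  define gg where "gg j = mat_pow A (m j) ** mat_pow Y (n j)" for j
  have gg: "aff r u (gg j) (x j) = (aff r u A ^^ m j) (y j)" for j
    unfolding gg_def aff_mult[OF G u mat_pow_in[OF G A] mat_pow_in[OF G Y]]
    using aff_mat_pow[OF G u Y x(2)] aff_mat_pow[OF G u A y] x(3) by simp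
  show ?thesis
  proof (rule not_acts_properly_if_bounded_returns[where gg = gg and x = x])
    show "inj gg" unfolding gg_def by (rule inj_mat_pow_products[OF eA eY nd n(1) m(1)])
    show "gg j \<in> G" for j
      unfolding gg_def using mat_pow_in[OF G A] mat_pow_in[OF G Y] psl_subgroupD(3)[OF G] by blast
    show "aff r u (gg j) (x j) \<in> Vr r" for j unfolding gg by (rule aff_iter_in_Vr[OF u A y])
    show "coord_bounded (\<lambda>j. aff r u (gg j) (x j))" unfolding gg by (rule images)
  qed (use x in simp_all)
qed

section \<open>Hyperbolic elements and Schottky groups\<close>

lemma trace_mat2: "trace (g::mat2) = g$1$1 + g$2$2"
  by (simp add: trace_def sum_2)

lemma hyperbolicD:
  assumes "hyperbolic g"
  shows "g$1$1 * g$2$2 - g$1$2 * g$2$1 = 1" "\<bar>g$1$1 + g$2$2\<bar> > 2"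
  using assms by (simp_all add: hyperbolic_def SL2_def det_2 trace_mat2)

lemma contracting_root_of_char_poly:
  fixes T :: real
  assumes T: "\<bar>T\<bar> > 2"
  obtains l where "0 < \<bar>l\<bar>" "\<bar>l\<bar> < 1" "l * l - T * l + 1 = 0"
proof
  define s where "s = sqrt (T\<^sup>2 - 4)"
  define l where "l = (T - sgn T * s) / 2"
  have T4: "4 < T\<^sup>2" using power_strict_mono[OF T, of 2] by simp
  have ss: "s * s = T\<^sup>2 - 4" using T4 by (simp add: s_def)
  have s_lt: "s < \<bar>T\<bar>" unfolding s_def using T4 by (simp add: real_sqrt_less_iff real_less_lsqrt)
  have s_gt: "\<bar>T\<bar> - 2 < s" unfolding s_def using T
    by (intro real_less_rsqrt) (simp add: power2_eq_square algebra_simps abs_mult_self_eq)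
  have sgn: "sgn T * sgn T = 1" "sgn T * T = \<bar>T\<bar>" using T by (auto simp: sgn_if)
  have "T \<noteq> 0" using T by auto
  then have "\<bar>l\<bar> = \<bar>sgn T * l\<bar>" by (simp add: abs_mult abs_sgn_eq)
  also have "sgn T * l = (\<bar>T\<bar> - s) / 2" unfolding l_def using sgn by (simp add: algebra_simps)
  finally have l: "\<bar>l\<bar> = (\<bar>T\<bar> - s) / 2" using s_lt by simp
  show "0 < \<bar>l\<bar>" "\<bar>l\<bar> < 1" using l s_lt s_gt by simp_all
  have l2: "2 * l = T - sgn T * s" by (simp add: l_def)
  have "4 * (l * l - T * l + 1) = (2 * l) * (2 * l) - 2 * T * (2 * l) + 4" by (simp add: algebra_simps)
  also have "\<dots> = (sgn T * sgn T) * (s * s) - T * T + 4" unfolding l2 by (simp add: algebra_simps)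
  also have "\<dots> = 0" using sgn ss by (simp add: power2_eq_square)
  finally show "l * l - T * l + 1 = 0" by simp
qed

lemma hyperbolic_eigenvector:
  assumes h: "hyperbolic g" and root: "\<nu> * \<nu> - (g$1$1 + g$2$2) * \<nu> + 1 = 0"
  obtains v where "v \<noteq> 0" "g *v v = \<nu> *\<^sub>R v"
proof (cases "g$1$2 \<noteq> 0 \<or> \<nu> \<noteq> g$1$1")
  case True
  let ?v = "vector [g$1$2, \<nu> - g$1$1] :: real^2"
  have "g$2$1 * g$1$2 + g$2$2 * (\<nu> - g$1$1) = \<nu> * (\<nu> - g$1$1)"
    using hyperbolicD(1)[OF h] root by algebra
  then have "g *v ?v = \<nu> *\<^sub>R ?v" by (intro vec2_eqI) (simp_all add: algebra_simps)
  moreover have "?v \<noteq> 0" using True by (auto simp: vec_eq_iff forall_2)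
  ultimately show thesis by (rule that[rotated])
next
  case False
  let ?v = "vector [g$1$1 - g$2$2, g$2$1] :: real^2"
  have "g$1$1 \<noteq> g$2$2"
  proof
    assume "g$1$1 = g$2$2"
    then have "g$1$1 * g$1$1 = 1" using hyperbolicD(1)[OF h] False by simp
    then have "g$1$1 = 1 \<or> g$1$1 = -1" by algebra
    then show False using hyperbolicD(2)[OF h] \<open>g$1$1 = g$2$2\<close> by auto
  qed
  then have "?v \<noteq> 0" by (auto simp: vec_eq_iff forall_2)
  moreover have "g *v ?v = \<nu> *\<^sub>R ?v" using False by (intro vec2_eqI) (simp_all add: algebra_simps)
  ultimately show thesis by (rule that)
qed

lemma hyperbolic_eigenframe:
  assumes h: "hyperbolic g"
  obtains l vm vp where "eigenframe g l vm vp"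
proof -
  obtain l where l: "0 < \<bar>l\<bar>" "\<bar>l\<bar> < 1" and root: "l * l - (g$1$1 + g$2$2) * l + 1 = 0"
    using contracting_root_of_char_poly[OF hyperbolicD(2)[OF h]] by blast
  have "(1/l) * (1/l) - (g$1$1 + g$2$2) * (1/l) + 1 = (l * l - (g$1$1 + g$2$2) * l + 1) / (l * l)"
    using l by (simp add: field_simps)
  then have root': "(1/l) * (1/l) - (g$1$1 + g$2$2) * (1/l) + 1 = 0" using root by simp
  obtain vp where vp: "vp \<noteq> 0" "g *v vp = l *\<^sub>R vp" using hyperbolic_eigenvector[OF h root] by blast
  obtain v where v: "v \<noteq> 0" "g *v v = (1/l) *\<^sub>R v" using hyperbolic_eigenvector[OF h root'] by blast
  have "l \<noteq> 1/l"
  proof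
    assume "l = 1/l"
    then have "\<bar>l\<bar> * \<bar>l\<bar> = 1" using l by (simp add: abs_mult[symmetric] field_simps)
    then show False using l by (metis abs_ge_zero less_le mult_strict_mono' mult_1 less_irrefl)
  qed
  have D: "det2 v vp \<noteq> 0"
  proof
    assume "det2 v vp = 0"
    then obtain c where "v = c *\<^sub>R vp" using det2_eq_0_parallel vp(1) by blast
    then have "g *v v = l *\<^sub>R v" using vp(2) by (simp add: matrix_vector_mult_scaleR)
    then have "(1/l - l) *\<^sub>R v = 0" using v(2) by (simp add: scaleR_diff_left)
    then show False using v(1) \<open>l \<noteq> 1/l\<close> by simp
  qed
  define vm where "vm = sgn (det2 v vp) *\<^sub>R v"
  have "g *v vm = (1/l) *\<^sub>R vm" using v(2) by (simp add: vm_def matrix_vector_mult_scaleR)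
  moreover have "det2 vm vp > 0" using D by (simp add: vm_def det2_scaleR_left sgn_mult_self_eq abs_if
      mult.commute[of "sgn _"] sgn_mult_abs[symmetric] flip: abs_sgn)
  ultimately show thesis using l vp by (intro that) (simp add: eigenframe_def)
qed

lemma hyperbolic_no_fixed_vector:
  assumes h: "hyperbolic c" and v: "c *v v = v"
  shows "v = 0"
proof -
  have e1: "c$1$1 * v$1 + c$1$2 * v$2 = v$1" and e2: "c$2$1 * v$1 + c$2$2 * v$2 = v$2"
    using arg_cong[OF v, of "\<lambda>x. x$1"] arg_cong[OF v, of "\<lambda>x. x$2"] by simp_all
  have "(2 - (c$1$1 + c$2$2)) * v$1 = 0" "(2 - (c$1$1 + c$2$2)) * v$2 = 0"
    using hyperbolicD(1)[OF h] e1 e2 by algebra+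
  moreover have "2 - (c$1$1 + c$2$2) \<noteq> 0" using hyperbolicD(2)[OF h] by auto
  ultimately show ?thesis by (intro vec2_eqI) auto
qed

lemma mat2_inverse_eigenvector:
  assumes M: "det (M::mat2) \<noteq> 0" and v: "M *v v = \<mu> *\<^sub>R v" "v \<noteq> 0"
  shows "\<mu> \<noteq> 0" "matrix_inv M *v v = (1/\<mu>) *\<^sub>R v"
proof -
  have "v = (matrix_inv M ** M) *v v" using mat2_inverse(2)[OF M] by simp
  also have "\<dots> = \<mu> *\<^sub>R (matrix_inv M *v v)"
    using v(1) by (simp add: matrix_vector_mul_assoc[symmetric] matrix_vector_mult_scaleR)
  finally have eq: "v = \<mu> *\<^sub>R (matrix_inv M *v v)" .
  then show "\<mu> \<noteq> 0" using v(2) by auto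
  then show "matrix_inv M *v v = (1/\<mu>) *\<^sub>R v" by (subst eq) simp
qed

lemma commutator_fixes_common_eigenvector:
  assumes "det (a::mat2) \<noteq> 0" "det b \<noteq> 0" "a *v v = \<alpha> *\<^sub>R v" "b *v v = \<beta> *\<^sub>R v"
  shows "(a ** b ** matrix_inv a ** matrix_inv b) *v v = v"
proof (cases "v = 0")
  case False
  note ia = mat2_inverse_eigenvector[OF assms(1,3) False]
  note ib = mat2_inverse_eigenvector[OF assms(2,4) False]
  show ?thesis using ia ib assms(3,4)
    by (simp add: matrix_vector_mul_assoc[symmetric] matrix_vector_mult_scaleR)
qed simp

text \<open>If every element of \<open>G\<close> preserved the line of \<open>v\<close>, the commutator of two non-commuting
  elements would fix \<open>v\<close>; but it is neither \<open>\<plusminus>1\<close> nor, being hyperbolic, has a fixed vector.\<close>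

lemma schottky_moves_line:
  assumes S: "schottky G" and v: "v \<noteq> 0"
  obtains C where "C \<in> G" "det2 (C *v v) v \<noteq> 0"
proof -
  have False if fixes_line: "\<And>C. C \<in> G \<Longrightarrow> det2 (C *v v) v = 0"
  proof -
    have G: "psl_subgroup G" using S by (simp add: schottky_def)
    obtain a b where a: "a \<in> G" and b: "b \<in> G" and ab: "a ** b \<noteq> b ** a"
      using S unfolding schottky_def by blast
    have det: "det a \<noteq> 0" "det b \<noteq> 0" using psl_subgroupD(1)[OF G] a b by auto
    obtain \<alpha> \<beta> where "a *v v = \<alpha> *\<^sub>R v" "b *v v = \<beta> *\<^sub>R v"
      using fixes_line[OF a] fixes_line[OF b] det2_eq_0_parallel v by metis
    define c where "c = a ** b ** matrix_inv a ** matrix_inv b"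
    have cv: "c *v v = v" unfolding c_def by (rule commutator_fixes_common_eigenvector) fact+
    have "c \<in> G" unfolding c_def using psl_subgroupD(3,4)[OF G] a b by blast
    moreover have "c \<noteq> mat 1"
    proof
      assume "c = mat 1"
      moreover have "c ** (b ** a) = a ** b ** (matrix_inv a ** ((matrix_inv b ** b) ** a))"
        by (simp add: c_def matrix_mul_assoc)
      then have "c ** (b ** a) = a ** b" using mat2_inverse[OF det(1)] mat2_inverse[OF det(2)] by simp
      ultimately show False using ab by simp
    qed
    moreover have "c \<noteq> - mat 1"
    proof
      assume "c = - mat 1"
      then have "v = - v" using cv by (simp add: vec_eq_iff forall_2)
      then show False using v by (simp add: vec_eq_iff forall_2)
    qed
    ultimately have "hyperbolic c" using S unfolding schottky_def by blast
    then show False using hyperbolic_no_fixed_vector cv v by blast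
  qed
  then show thesis using that by blast
qed

lemma eigenframe_conj:
  assumes C: "det C = 1" and e: "eigenframe B \<rho> wm wp"
  shows "eigenframe (C ** B ** matrix_inv C) \<rho> (C *v wm) (C *v wp)"
proof -
  have "(C ** B ** matrix_inv C) *v (C *v x) = C *v (B *v x)" for x
    using mat2_inverse[of C] C by (simp add: matrix_vector_mul_assoc matrix_mul_assoc[symmetric])
  then show ?thesis using e C by (simp add: eigenframe_def matrix_vector_mult_scaleR det2_matrix_vector_mult)
qed

lemma colmat_inv_conj:
  assumes C: "det C = 1" and D: "det2 v w \<noteq> 0"
  shows "colmat_inv (C *v v) (C *v w) ** C = colmat_inv v w"
proof -
  have D': "det2 (C *v v) (C *v w) \<noteq> 0" using C D by (simp add: det2_matrix_vector_mult)
  have CC: "colmat (C *v v) (C *v w) = C ** colmat v w" by (rule mat2_eqI) simp_all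
  have "colmat_inv (C *v v) (C *v w) ** C = colmat_inv (C *v v) (C *v w) ** C ** (colmat v w ** colmat_inv v w)"
    using D by (simp add: colmat_mult_colmat_inv)
  also have "\<dots> = (colmat_inv (C *v v) (C *v w) ** colmat (C *v v) (C *v w)) ** colmat_inv v w"
    by (simp add: CC matrix_mul_assoc)
  also have "\<dots> = colmat_inv v w" using D' by (simp add: colmat_inv_mult_colmat)
  finally show ?thesis .
qed

text \<open>With \<open>u' = u (C^-1)\<close> one has \<open>u (C B C^-1) = L(C) (u B + L(B) u' - u')\<close>, and
  \<open>L(B) u' - u'\<close> has no neutral component.\<close>

lemma fcoord_middle_conj:
  assumes G: "psl_subgroup G" and u: "cocycle r G u" and C: "C \<in> G" and B: "B \<in> G"
    and e: "eigenframe B \<rho> wm wp"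
  shows "fcoord r (C *v wm) (C *v wp) (u (C ** B ** matrix_inv C)) r = fcoord r wm wp (u B) r"
proof -
  define Ci where "Ci = matrix_inv C"
  have Ci: "Ci \<in> G" using psl_subgroupD(4)[OF G C] by (simp add: Ci_def)
  have dC: "det C = 1" using psl_subgroupD(1)[OF G C] .
  have D: "det2 wm wp \<noteq> 0" using e by (simp add: eigenframe_def)
  have coc: "\<And>g h. g \<in> G \<Longrightarrow> h \<in> G \<Longrightarrow> u (g ** h) = (\<lambda>k. u g k + Lrep r g (u h) k)"
    using u by (simp add: cocycle_def)
  define u' where "u' = u Ci"
  have "u (mat 1) = (\<lambda>k. u C k + Lrep r C u' k)"
    using coc[OF C Ci] mat2_inverse(1)[of C] dC by (simp add: u'_def Ci_def)
  then have uC: "u C = (\<lambda>k. - Lrep r C u' k)"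
    using cocycle_id[OF G u] by (simp add: fun_eq_iff eq_neg_iff_add_eq_0)
  define w where "w = (\<lambda>k. u B k + Lrep r B u' k - u' k)"
  have "u (C ** B ** Ci) = (\<lambda>k. u (C ** B) k + Lrep r (C ** B) u' k)"
    using coc[OF psl_subgroupD(3)[OF G C B] Ci] by (simp add: u'_def)
  also have "\<dots> = Lrep r C w"
    using coc[OF C B] uC dC by (simp add: w_def Lrep_add Lrep_diff Lrep_mult[symmetric] algebra_simps)
  finally have "fcoord r (C *v wm) (C *v wp) (u (C ** B ** Ci)) = fcoord r wm wp w"
    using dC D by (simp add: fcoord_def Lrep_mult det2_matrix_vector_mult det_colmat_inv_nonzero colmat_inv_conj)
  moreover have "fcoord r wm wp (Lrep r B u') r = fcoord r wm wp u' r"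
    using e by (simp add: fcoord_Lrep_eigenframe[OF e] weight_middle eigenframe_def)
  ultimately show ?thesis by (simp add: Ci_def w_def fcoord_add fcoord_diff)
qed

lemma exists_transverse_conjugate:
  assumes S: "schottky G" and u: "cocycle r G u" and Y: "Y \<in> G" and eY: "eigenframe Y \<rho> wm wp"
    and vp: "vp \<noteq> 0"
  obtains Y' wm' wp' where "Y' \<in> G" "eigenframe Y' \<rho> wm' wp'" "det2 wm' vp \<noteq> 0"
    "fcoord r wm' wp' (u Y') r = fcoord r wm wp (u Y) r"
proof (cases "det2 wm vp = 0")
  case False
  then show thesis using Y eY by (intro that) auto
next
  case True
  have G: "psl_subgroup G" using S by (simp add: schottky_def)
  obtain C where C: "C \<in> G" and Cvp: "det2 (C *v vp) vp \<noteq> 0" using schottky_moves_line[OF S vp] by blast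
  obtain c where c: "wm = c *\<^sub>R vp" using det2_eq_0_parallel[OF True vp] by blast
  have "c \<noteq> 0" using c eY by (auto simp: eigenframe_def det2_def)
  show thesis
  proof (rule that)
    show "C ** Y ** matrix_inv C \<in> G" using psl_subgroupD(3,4)[OF G] C Y by blast
    show "eigenframe (C ** Y ** matrix_inv C) \<rho> (C *v wm) (C *v wp)"
      by (rule eigenframe_conj[OF psl_subgroupD(1)[OF G C] eY])
    show "det2 (C *v wm) vp \<noteq> 0"
      using \<open>c \<noteq> 0\<close> Cvp by (simp add: c matrix_vector_mult_scaleR det2_scaleR_left)
  qed (rule fcoord_middle_conj[OF G u C Y eY])
qed

theorem mainTheorem4:
  fixes r :: nat and G :: "(real^2^2) set" and u :: "real^2^2 \<Rightarrow> (nat \<Rightarrow> real)"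
  assumes "r \<ge> 1"
    and "schottky G"
    and "cocycle r G u"
    and "\<exists>g1\<in>G. \<exists>g2\<in>G. hyperbolic g1 \<and> hyperbolic g2 \<and>
            margulis r u g1 < 0 \<and> 0 < margulis r u g2"
  shows "\<not> acts_properly r G u"
proof -
  have G: "psl_subgroup G" using assms(2) by (simp add: schottky_def)
  have uV: "u g \<in> Vr r" if "g \<in> G" for g using assms(3) that by (simp add: cocycle_def)
  obtain g1 g2 where g: "g1 \<in> G" "g2 \<in> G" and h: "hyperbolic g1" "hyperbolic g2"
    and m: "margulis r u g1 < 0" "0 < margulis r u g2"
    using assms(4) by blast
  obtain l vm vp where e1: "eigenframe g1 l vm vp" using hyperbolic_eigenframe[OF h(1)] .
  obtain \<rho> wm wp where e2: "eigenframe g2 \<rho> wm wp" using hyperbolic_eigenframe[OF h(2)] .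
  have neg: "fcoord r vm vp (u g1) r < 0"
    using margulis_eq_pos_multiple[where u = u, OF e1 uV[OF g(1)]] m(1) by (auto simp: mult_less_0_iff)
  have pos: "fcoord r wm wp (u g2) r > 0"
    using margulis_eq_pos_multiple[where u = u, OF e2 uV[OF g(2)]] m(2) by (auto simp: zero_less_mult_iff)
  have "vp \<noteq> 0" using e1 by (auto simp: eigenframe_def det2_def)
  then obtain Y wm' wp' where "Y \<in> G" "eigenframe Y \<rho> wm' wp'" "det2 wm' vp \<noteq> 0"
    "fcoord r wm' wp' (u Y) r = fcoord r wm wp (u g2) r"
    using exists_transverse_conjugate[OF assms(2,3) g(2) e2] by blast
  then show ?thesis
    using not_acts_properly_if_opposite_drifts[OF G assms(3) g(1) _ e1] neg pos by simp
qed

end
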